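(* Let $a<b$ be real numbers and let $\{\psi_N(z)\}_{N=1,2,3,\dots}$ be a sequence of holomorphic functions on a domain $D\subset\mathbb{C}$ containing the closed interval $[a,b]$, converging uniformly on $D$ to a holomorphic function $\psi(z)$. Assume $\Re\psi(a)<0$ and $\Re\psi(b)<0$. Put $R_+:=\{z\in D:\Im z\ge0,\ \Re\psi(z)<2\pi\Im z\}$ and $R_-:=\{z\in D:\Im z\le0,\ \Re\psi(z)<-2\pi\Im z\}$, and assume that there are paths $C_{\pm}\subset R_{\pm}$ connecting $a$ and $b$ such that each $C_\pm$ is homotopic to $[a,b]$ in $D$ with $a$ and $b$ fixed. Then there exists $\varepsilon>0$ independent of $N$ such that \[ \frac1N\sum_{k\in\mathbb{Z},\ a\le k/N\le b}e^{N\psi_N(k/N)}=\int_a^b e^{N\psi_N(z)}\,dz+O(e^{-\varepsilon N})\qquad(N\to\infty). \] *)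

theory Defs
  imports "HOL-Complex_Analysis.Complex_Analysis"
begin

definition region_plus :: "complex set \<Rightarrow> (complex \<Rightarrow> complex) \<Rightarrow> complex set" where
  "region_plus D \<psi> = {z \<in> D. Im z \<ge> 0 \<and> Re (\<psi> z) < 2 * pi * Im z}"

definition region_minus :: "complex set \<Rightarrow> (complex \<Rightarrow> complex) \<Rightarrow> complex set" where
  "region_minus D \<psi> = {z \<in> D. Im z \<le> 0 \<and> Re (\<psi> z) < - 2 * pi * Im z}"

definition lattice_sum :: "real \<Rightarrow> real \<Rightarrow> nat \<Rightarrow> (complex \<Rightarrow> complex) \<Rightarrow> complex" where
  "lattice_sum a b N f =
     (1 / of_nat N) * (\<Sum>k\<in>{k::int. a \<le> real_of_int k / real N \<and> real_of_int k / real N \<le> b}.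
        exp (of_nat N * f (complex_of_real (real_of_int k / real N))))"

end

theory Submission
  imports Defs
begin

text \<open>
  Let \<open>a0 < b0\<close> be the half-lattice points just outside the lattice points \<open>k/N\<close> of \<open>[a, b]\<close>,
  and let \<open>\<gamma>\<^sub>+\<close>, \<open>\<gamma>\<^sub>-\<close> run from \<open>a0\<close> to \<open>b0\<close> through the upper and the lower half-plane,
  both homotopic in \<open>D\<close> to the segment.  For \<open>f\<close> holomorphic on \<open>D\<close>, the residue theorem for
  \<open>f(z) / (exp (2 pi i N z) - 1)\<close>, whose poles \<open>k/N\<close> have residues \<open>f(k/N) / (2 pi i N)\<close>, on the loop
  \<open>\<gamma>\<^sub>- - \<gamma>\<^sub>+\<close>, together with \<open>1/(exp w - 1) + 1/(exp (-w) - 1) = -1\<close> on \<open>\<gamma>\<^sub>+\<close>, gives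
  \<open>(1/N) \<Sum> f(k/N) = \<integral>[a0,b0] f + \<integral>\<^bsub>\<gamma>\<^sub>-\<^esub> f/(exp (2 pi i N z) - 1) + \<integral>\<^bsub>\<gamma>\<^sub>+\<^esub> f/(exp (-2 pi i N z) - 1)\<close>.

  For \<open>f = exp (N \<psi>\<^sub>N)\<close> the upper integrand has size about \<open>exp (N (Re \<psi>\<^sub>N z - 2 pi Im z))\<close>. The path
  \<open>C\<^sub>+\<close> is compact in the open set \<open>Re \<psi> < 2 pi Im z\<close>, so a slightly lifted polynomial approximation of
  it, joined to \<open>a0\<close> and \<open>b0\<close> by short hooks, keeps \<open>Re \<psi>\<^sub>N - 2 pi Im\<close> below a fixed \<open>-c\<close> for large \<open>N\<close>
  by uniform convergence; this makes the upper integral \<open>O(exp (-c N))\<close>.  The lower integral is the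
  same statement after the reflection \<open>z \<mapsto> -z\<close>, and the two short real pieces \<open>[a0, a]\<close>, \<open>[b, b0]\<close>
  are exponentially small because \<open>Re \<psi> < 0\<close> near \<open>a\<close> and \<open>b\<close>.
\<close>


section \<open>Half-lattice cut points and the lattice\<close>

text \<open>The points \<open>a0\<close>, \<open>b0\<close> above are \<open>lower_cut a N\<close> and \<open>upper_cut b N\<close>.\<close>

definition half_lattice :: "nat \<Rightarrow> int \<Rightarrow> real" where
  "half_lattice N j = (real_of_int j + 1/2) / real N"

definition lower_cut :: "real \<Rightarrow> nat \<Rightarrow> real" where
  "lower_cut A N = half_lattice N (\<lceil>A * real N\<rceil> - 1)"

definition upper_cut :: "real \<Rightarrow> nat \<Rightarrow> real" where
  "upper_cut B N = half_lattice N \<lfloor>B * real N\<rfloor>"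

definition lattice :: "nat \<Rightarrow> complex set" where
  "lattice N = range (\<lambda>k::int. complex_of_real (real_of_int k / real N))"

lemma lattice_ne_half_lattice:
  assumes "N > 0"
  shows "real_of_int k / real N \<noteq> half_lattice N j"
proof
  assume "real_of_int k / real N = half_lattice N j"
  then have "real_of_int (2 * k) = real_of_int (2 * j + 1)"
    using assms by (simp add: half_lattice_def field_simps)
  then show False by presburger
qed

lemma half_lattice_notin_lattice:
  assumes "N > 0"
  shows "complex_of_real (half_lattice N j) \<notin> lattice N"
proof
  assume "complex_of_real (half_lattice N j) \<in> lattice N"
  then obtain k :: int where "complex_of_real (half_lattice N j) = of_real (real_of_int k / real N)"
    unfolding lattice_def by blast
  then have "half_lattice N j = real_of_int k / real N" by (simp only: of_real_eq_iff)
  then show False using lattice_ne_half_lattice[OF assms, of k j] by simp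
qed

lemma lower_cut_less_iff:
  assumes "N > 0"
  shows "lower_cut A N < real_of_int k / real N \<longleftrightarrow> A \<le> real_of_int k / real N"
proof -
  have "lower_cut A N < real_of_int k / real N \<longleftrightarrow> real_of_int \<lceil>A * real N\<rceil> - 1/2 < real_of_int k"
    using assms by (simp add: lower_cut_def half_lattice_def divide_less_cancel)
  also have "\<dots> \<longleftrightarrow> A * real N \<le> real_of_int k"
    by (simp add: ceiling_le_iff[symmetric]) linarith
  also have "\<dots> \<longleftrightarrow> A \<le> real_of_int k / real N"
    using assms by (simp add: field_simps)
  finally show ?thesis .
qed

lemma less_upper_cut_iff:
  assumes "N > 0"
  shows "real_of_int k / real N < upper_cut B N \<longleftrightarrow> real_of_int k / real N \<le> B"
proof -
  have "real_of_int k / real N < upper_cut B N \<longleftrightarrow> real_of_int k < real_of_int \<lfloor>B * real N\<rfloor> + 1/2"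
    using assms by (simp add: upper_cut_def half_lattice_def divide_less_cancel)
  also have "\<dots> \<longleftrightarrow> real_of_int k \<le> B * real N"
    by (simp add: le_floor_iff[symmetric]) linarith
  also have "\<dots> \<longleftrightarrow> real_of_int k / real N \<le> B"
    using assms by (simp add: field_simps)
  finally show ?thesis .
qed

lemma lower_cut_le_upper_cut:
  assumes "N > 0" "a \<le> b"
  shows "lower_cut a N \<le> upper_cut b N"
proof -
  have "real_of_int \<lceil>a * real N\<rceil> - 1 < b * real N"
    using assms mult_right_mono[OF assms(2), of "real N"] by linarith
  then have "\<lceil>a * real N\<rceil> - 1 \<le> \<lfloor>b * real N\<rfloor>" by linarith
  then show ?thesis
    using assms(1) by (simp add: lower_cut_def upper_cut_def half_lattice_def divide_right_mono)
qed

lemma abs_lower_cut_diff: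
  assumes "N > 0"
  shows "\<bar>lower_cut A N - A\<bar> \<le> 1 / (2 * real N)"
proof -
  have "A * real N \<le> real_of_int \<lceil>A * real N\<rceil>" "real_of_int \<lceil>A * real N\<rceil> < A * real N + 1"
    by linarith+
  then have small: "\<bar>real_of_int \<lceil>A * real N\<rceil> - 1/2 - A * real N\<bar> \<le> 1/2"
    unfolding abs_le_iff by linarith
  have "lower_cut A N - A = (real_of_int \<lceil>A * real N\<rceil> - 1/2 - A * real N) / real N"
    using assms by (simp add: lower_cut_def half_lattice_def field_simps)
  then have "\<bar>lower_cut A N - A\<bar> = \<bar>real_of_int \<lceil>A * real N\<rceil> - 1/2 - A * real N\<bar> / real N"
    by (simp add: abs_divide)
  also have "\<dots> \<le> (1/2) / real N"
    using small by (rule divide_right_mono) simp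
  finally show ?thesis by simp
qed

lemma abs_upper_cut_diff:
  assumes "N > 0"
  shows "\<bar>upper_cut B N - B\<bar> \<le> 1 / (2 * real N)"
proof -
  have "real_of_int \<lfloor>B * real N\<rfloor> \<le> B * real N" "B * real N < real_of_int \<lfloor>B * real N\<rfloor> + 1"
    by linarith+
  then have small: "\<bar>real_of_int \<lfloor>B * real N\<rfloor> + 1/2 - B * real N\<bar> \<le> 1/2"
    unfolding abs_le_iff by linarith
  have "upper_cut B N - B = (real_of_int \<lfloor>B * real N\<rfloor> + 1/2 - B * real N) / real N"
    using assms by (simp add: upper_cut_def half_lattice_def field_simps)
  then have "\<bar>upper_cut B N - B\<bar> = \<bar>real_of_int \<lfloor>B * real N\<rfloor> + 1/2 - B * real N\<bar> / real N"
    by (simp add: abs_divide)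
  also have "\<dots> \<le> (1/2) / real N"
    using small by (rule divide_right_mono) simp
  finally show ?thesis by simp
qed

lemma lower_cut_uminus: "N > 0 \<Longrightarrow> lower_cut (- B) N = - upper_cut B N"
  by (simp add: lower_cut_def upper_cut_def half_lattice_def ceiling_minus field_simps)

lemma upper_cut_uminus: "N > 0 \<Longrightarrow> upper_cut (- A) N = - lower_cut A N"
  by (simp add: lower_cut_def upper_cut_def half_lattice_def floor_minus field_simps)

lemma eventually_inverse_real_less:
  assumes "0 < \<epsilon>"
  shows "\<forall>\<^sub>F N in sequentially. 1 / real N < \<epsilon>"
  using order_tendstoD(2)[OF lim_1_over_n assms] by simp

lemma eventually_cuts_near:
  assumes "0 < \<epsilon>"
  shows "\<forall>\<^sub>F N in sequentially. 0 < N \<and> \<bar>lower_cut A N - A\<bar> < \<epsilon> \<and> \<bar>upper_cut B N - B\<bar> < \<epsilon>"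
  using eventually_inverse_real_less[OF assms] eventually_gt_at_top[of 0]
proof eventually_elim
  case (elim N)
  then have "1 / (2 * real N) < \<epsilon>" by (simp add: field_simps)
  then show ?case
    using elim abs_lower_cut_diff[of N A] abs_upper_cut_diff[of N B] by auto
qed

lemma Im_lattice: "z \<in> lattice N \<Longrightarrow> Im z = 0"
  by (auto simp: lattice_def)

lemma dist_lattice_ge:
  assumes "N > 0" "z \<in> lattice N" "w \<in> lattice N" "z \<noteq> w"
  shows "dist z w \<ge> 1 / real N"
proof -
  obtain j k :: int where jk: "z = complex_of_real (real_of_int j / real N)" "w = complex_of_real (real_of_int k / real N)"
    using assms(2,3) unfolding lattice_def by blast
  then have "j \<noteq> k" using assms(4) by blast
  then have "1 \<le> \<bar>real_of_int j - real_of_int k\<bar>" by linarith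
  then have "1 / real N \<le> \<bar>real_of_int j - real_of_int k\<bar> / real N"
    using assms(1) by (simp add: divide_right_mono)
  also have "\<dots> = \<bar>real_of_int j / real N - real_of_int k / real N\<bar>"
    by (simp add: abs_divide flip: diff_divide_distrib)
  also have "\<dots> = dist z w"
    unfolding jk dist_norm of_real_diff[symmetric] norm_of_real ..
  finally show ?thesis .
qed

lemma closed_subset_lattice:
  assumes "N > 0" "S \<subseteq> lattice N"
  shows "closed S"
  by (rule discrete_imp_closed[of "1 / real N"])
     (use assms dist_lattice_ge[OF assms(1)] in \<open>force simp: dist_commute\<close>)+

lemma finite_lattice_points:
  assumes "N > 0"
  shows "finite {k::int. a \<le> real_of_int k / real N \<and> real_of_int k / real N \<le> b}"
proof -
  have "{k::int. a \<le> real_of_int k / real N \<and> real_of_int k / real N \<le> b} \<subseteq> {\<lceil>a * real N\<rceil>..\<lfloor>b * real N\<rfloor>}"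
    using assms by (auto simp: ceiling_le_iff le_floor_iff field_simps)
  then show ?thesis by (rule finite_subset) simp
qed

lemma exp_2pi_eq_1_iff_lattice:
  assumes "N > 0"
  shows "exp (2 * of_real pi * \<i> * of_nat N * z) = 1 \<longleftrightarrow> z \<in> lattice N"
proof
  assume "exp (2 * of_real pi * \<i> * of_nat N * z) = 1"
  then obtain n :: int where "Re (2 * of_real pi * \<i> * of_nat N * z) = 0"
     "Im (2 * of_real pi * \<i> * of_nat N * z) = of_int (2 * n) * pi"
    unfolding exp_eq_1 by blast
  then have "Im z = 0" "Re z * N = n" using assms pi_gt_zero by (auto simp: field_simps)
  then show "z \<in> lattice N"
    using assms unfolding lattice_def by (intro image_eqI[of _ _ n]) (auto simp: complex_eq_iff field_simps)
next
  assume "z \<in> lattice N"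
  then obtain k :: int where "z = complex_of_real (real_of_int k / real N)"
    unfolding lattice_def by blast
  then have "2 * of_real pi * \<i> * of_nat N * z = \<i> * (of_int k * (of_real pi * 2))"
    using assms by (simp add: complex_eq_iff field_simps)
  then show "exp (2 * of_real pi * \<i> * of_nat N * z) = 1"
    by (simp only: exp_2pi_1_int)
qed

lemma exp_minus_2pi_eq_1_iff_lattice:
  assumes "N > 0"
  shows "exp (- 2 * of_real pi * \<i> * of_nat N * z) = 1 \<longleftrightarrow> z \<in> lattice N"
proof -
  have "exp (- 2 * of_real pi * \<i> * of_nat N * z) = inverse (exp (2 * of_real pi * \<i> * of_nat N * z))"
    by (simp add: exp_minus[symmetric])
  then show ?thesis
    using exp_2pi_eq_1_iff_lattice[OF assms] by (metis inverse_1 inverse_inverse_eq)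
qed

section \<open>Winding numbers around real points\<close>

lemma starlike_halfplane_diff_real_point:
  assumes "s \<noteq> 0"
  shows "starlike ({z. 0 \<le> s * Im z} - {complex_of_real x})"
  unfolding starlike_def
proof (intro bexI[of _ "complex_of_real x + \<i> * of_real s"] ballI)
  show "complex_of_real x + \<i> * of_real s \<in> {z. 0 \<le> s * Im z} - {complex_of_real x}"
    using assms by (auto simp: complex_eq_iff)
  fix y assume y: "y \<in> {z. 0 \<le> s * Im z} - {complex_of_real x}"
  show "closed_segment (complex_of_real x + \<i> * of_real s) y \<subseteq> {z. 0 \<le> s * Im z} - {complex_of_real x}"
  proof
    fix w assume "w \<in> closed_segment (complex_of_real x + \<i> * of_real s) y"
    then obtain u where u: "0 \<le> u" "u \<le> 1" "w = (1 - u) *\<^sub>R (complex_of_real x + \<i> * of_real s) + u *\<^sub>R y"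
      unfolding closed_segment_def by blast
    have Im_w: "Im w = (1 - u) * s + u * Im y"
      using u(3) by simp
    have sIm: "s * Im w = (1 - u) * s\<^sup>2 + u * (s * Im y)"
      unfolding Im_w by (simp add: power2_eq_square algebra_simps)
    have nonneg: "0 \<le> (1 - u) * s\<^sup>2" "0 \<le> u * (s * Im y)"
      using u(1,2) y by auto
    have "w \<noteq> complex_of_real x"
    proof
      assume "w = complex_of_real x"
      then have "(1 - u) * s\<^sup>2 + u * (s * Im y) = 0" using sIm by simp
      then have "(1 - u) * s\<^sup>2 = 0" using nonneg by linarith
      then have "u = 1" using assms by simp
      then show False using u(3) y \<open>w = complex_of_real x\<close> by simp
    qed
    then show "w \<in> {z. 0 \<le> s * Im z} - {complex_of_real x}"
      using sIm nonneg by simp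
  qed
qed

lemma starlike_upper_halfplane_diff: "starlike ({z. 0 \<le> Im z} - {complex_of_real x})"
  using starlike_halfplane_diff_real_point[of 1 x] by simp

lemma starlike_lower_halfplane_diff: "starlike ({z. Im z \<le> 0} - {complex_of_real x})"
  using starlike_halfplane_diff_real_point[of "-1" x] by simp

lemma homotopic_paths_in_simply_connected:
  fixes S :: "'a::real_normed_vector set"
  assumes "simply_connected S" "path g" "path h" "path_image g \<subseteq> S" "path_image h \<subseteq> S"
    "pathstart h = pathstart g" "pathfinish h = pathfinish g"
  shows "homotopic_paths S g h"
  using assms unfolding simply_connected_eq_homotopic_paths by blast

lemma winding_number_eq_simply_connected:
  assumes "simply_connected S" "z \<notin> S" "path g" "path h" "path_image g \<subseteq> S" "path_image h \<subseteq> S"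
    "pathstart h = pathstart g" "pathfinish h = pathfinish g"
  shows "winding_number g z = winding_number h z"
proof (rule winding_number_homotopic_paths)
  have "homotopic_paths S g h"
    using assms by (intro homotopic_paths_in_simply_connected)
  then show "homotopic_paths (- {z}) g h"
    by (rule homotopic_paths_subset) (use assms(2) in blast)
qed

lemma winding_number_join_reversepath:
  assumes "path g" "path h" "pathstart h = pathstart g" "pathfinish h = pathfinish g"
    "z \<notin> path_image g" "z \<notin> path_image h"
  shows "winding_number (g +++ reversepath h) z = winding_number g z - winding_number h z"
  using assms by (simp add: winding_number_join winding_number_reversepath)

lemma winding_number_part_circlepath_centre:
  assumes "r > 0" "s < t"
  shows "winding_number (part_circlepath z r s t) z = (t - s) / (2 * pi)"
proof -
  have nz: "z \<notin> path_image (part_circlepath z r s t)"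
    using assms by (auto simp: path_image_part_circlepath')
  have "((\<lambda>x. \<i>) has_integral (\<i> * (t - s))) {s..t}"
    using has_integral_const_real[of "\<i>" s t] assms by (simp add: scaleR_conv_of_real algebra_simps)
  moreover have "(\<lambda>x. 1 / (z + complex_of_real r * cis x - z) * complex_of_real r * \<i> * cis x) = (\<lambda>x. \<i>)"
    using assms by (intro ext) (simp add: field_simps cis_neq_zero)
  ultimately have "((\<lambda>w. 1 / (w - z)) has_contour_integral (\<i> * (t - s))) (part_circlepath z r s t)"
    unfolding has_contour_integral_part_circlepath_iff[OF assms(2)] by simp
  then have "winding_number (part_circlepath z r s t) z = 1/(2*pi*\<i>) * (\<i> * (t - s))"
    using winding_number_valid_path[OF valid_path_part_circlepath nz] contour_integral_unique by simp
  also have "\<dots> = (t - s) / (2 * pi)" by (simp add: field_simps)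
  finally show ?thesis .
qed

lemma path_image_lower_semicircle:
  assumes "r > 0"
  shows "path_image (part_circlepath (complex_of_real x) r pi (2 * pi)) \<subseteq> {z. Im z \<le> 0} - {complex_of_real x}"
proof
  fix z assume "z \<in> path_image (part_circlepath (complex_of_real x) r pi (2 * pi))"
  then obtain t where t: "pi \<le> t" "t \<le> 2 * pi" "z = complex_of_real x + complex_of_real r * cis t"
    unfolding path_image_part_circlepath' by (auto simp: closed_segment_eq_real_ivl)
  have "sin t \<le> 0"
    using t(1,2) sin_le_zero[of t] by (cases "t = 2 * pi") auto
  then show "z \<in> {z. Im z \<le> 0} - {complex_of_real x}"
    using t(3) assms by (simp add: mult_nonneg_nonpos cis_neq_zero)
qed

lemma path_image_upper_semicircle:
  assumes "r > 0"
  shows "path_image (part_circlepath (complex_of_real x) r 0 pi) \<subseteq> {z. 0 \<le> Im z} - {complex_of_real x}"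
proof
  fix z assume "z \<in> path_image (part_circlepath (complex_of_real x) r 0 pi)"
  then obtain t where t: "0 \<le> t" "t \<le> pi" "z = complex_of_real x + complex_of_real r * cis t"
    unfolding path_image_part_circlepath' by (auto simp: closed_segment_eq_real_ivl)
  then show "z \<in> {z. 0 \<le> Im z} - {complex_of_real x}"
    using assms sin_ge_zero[of t] by (simp add: cis_neq_zero)
qed

lemma path_image_real_linepath_avoid:
  assumes "x \<notin> closed_segment u v"
  shows "path_image (linepath (complex_of_real u) (complex_of_real v)) \<subseteq> {z. Im z = 0} - {complex_of_real x}"
  using assms by (auto simp: closed_segment_of_real)

lemma winding_number_lower_minus_upper_inside:
  fixes p q x :: real
  assumes px: "p < x" and xq: "x < q"
    and l: "path \<gamma>l" "pathstart \<gamma>l = of_real p" "pathfinish \<gamma>l = of_real q"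
      "path_image \<gamma>l \<subseteq> {z. Im z \<le> 0} - {of_real x}"
    and u: "path \<gamma>u" "pathstart \<gamma>u = of_real p" "pathfinish \<gamma>u = of_real q"
      "path_image \<gamma>u \<subseteq> {z. 0 \<le> Im z} - {of_real x}"
  shows "winding_number \<gamma>l x - winding_number \<gamma>u x = 1"
proof -
  define r where "r = min (x - p) (q - x)"
  have r: "r > 0" "p \<le> x - r" "x + r \<le> q" using px xq by (auto simp: r_def)
  define l1 where "l1 = linepath (complex_of_real p) (complex_of_real (x - r))"
  define l2 where "l2 = linepath (complex_of_real (x + r)) (complex_of_real q)"
  define lower where "lower = part_circlepath (complex_of_real x) r pi (2 * pi)"
  define upper where "upper = part_circlepath (complex_of_real x) r 0 pi"
  have ends: "pathstart lower = of_real (x - r)" "pathfinish lower = of_real (x + r)"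
    "pathstart upper = of_real (x + r)" "pathfinish upper = of_real (x - r)"
    by (simp_all add: lower_def upper_def) (metis exp_two_pi_i mult.commute)
  have lines: "path_image l1 \<subseteq> {z. Im z = 0} - {of_real x}" "path_image l2 \<subseteq> {z. Im z = 0} - {of_real x}"
    unfolding l1_def l2_def using r by (intro path_image_real_linepath_avoid; simp add: closed_segment_eq_real_ivl)+
  have arcs: "path_image lower \<subseteq> {z. Im z \<le> 0} - {of_real x}" "path_image upper \<subseteq> {z. 0 \<le> Im z} - {of_real x}"
    unfolding lower_def upper_def using path_image_lower_semicircle path_image_upper_semicircle r(1) by auto
  have paths: "path l1" "path l2" "path lower" "path upper"
    by (simp_all add: l1_def l2_def lower_def upper_def)
  have x_off: "of_real x \<notin> path_image l1" "of_real x \<notin> path_image l2"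
    "of_real x \<notin> path_image lower" "of_real x \<notin> path_image upper"
    using lines arcs by auto
  have "winding_number \<gamma>l x = winding_number (l1 +++ (lower +++ l2)) x"
    using l lines arcs ends paths
    by (intro winding_number_eq_simply_connected[OF starlike_imp_simply_connected[OF starlike_lower_halfplane_diff]])
       (auto simp: path_image_join l1_def l2_def)
  also have "\<dots> = winding_number l1 x + winding_number lower x + winding_number l2 x"
    using paths x_off ends by (simp add: winding_number_join path_image_join l1_def l2_def)
  finally have wl: "winding_number \<gamma>l x = winding_number l1 x + winding_number lower x + winding_number l2 x" .
  have "winding_number \<gamma>u x = winding_number (l1 +++ (reversepath upper +++ l2)) x"
    using u lines arcs ends paths
    by (intro winding_number_eq_simply_connected[OF starlike_imp_simply_connected[OF starlike_upper_halfplane_diff]])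
       (auto simp: path_image_join l1_def l2_def)
  also have "\<dots> = winding_number l1 x - winding_number upper x + winding_number l2 x"
    using paths x_off ends
    by (simp add: winding_number_join winding_number_reversepath path_image_join l1_def l2_def)
  finally have wu: "winding_number \<gamma>u x = winding_number l1 x - winding_number upper x + winding_number l2 x" .
  have "winding_number lower x + winding_number upper x = 1"
    using r by (simp add: lower_def upper_def winding_number_part_circlepath_centre field_simps)
  then show ?thesis using wl wu by simp
qed

lemma winding_number_lower_minus_upper_outside:
  fixes p q x :: real
  assumes "x \<notin> closed_segment p q"
    and l: "path \<gamma>l" "pathstart \<gamma>l = of_real p" "pathfinish \<gamma>l = of_real q"
      "path_image \<gamma>l \<subseteq> {z. Im z \<le> 0} - {of_real x}"
    and u: "path \<gamma>u" "pathstart \<gamma>u = of_real p" "pathfinish \<gamma>u = of_real q"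
      "path_image \<gamma>u \<subseteq> {z. 0 \<le> Im z} - {of_real x}"
  shows "winding_number \<gamma>l x - winding_number \<gamma>u x = 0"
proof -
  have line: "path_image (linepath (of_real p) (of_real q)) \<subseteq> {z. Im z = 0} - {of_real x}"
    using assms(1) by (rule path_image_real_linepath_avoid)
  have "winding_number \<gamma>l x = winding_number (linepath (of_real p) (of_real q)) x"
    using l line
    by (intro winding_number_eq_simply_connected[OF starlike_imp_simply_connected[OF starlike_lower_halfplane_diff]]) auto
  moreover have "winding_number \<gamma>u x = winding_number (linepath (of_real p) (of_real q)) x"
    using u line
    by (intro winding_number_eq_simply_connected[OF starlike_imp_simply_connected[OF starlike_upper_halfplane_diff]]) auto
  ultimately show ?thesis by simp
qed

section \<open>Detours and the residue formula\<close>

definition detour :: "complex set \<Rightarrow> complex set \<Rightarrow> complex \<Rightarrow> complex \<Rightarrow> (real \<Rightarrow> complex) \<Rightarrow> bool" where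
  "detour D H p q \<gamma> \<longleftrightarrow>
     valid_path \<gamma> \<and> path_image \<gamma> - {p, q} \<subseteq> H \<and> homotopic_paths D \<gamma> (linepath p q)"

lemma detourD:
  assumes "detour D H p q \<gamma>"
  shows "valid_path \<gamma>" "path \<gamma>" "pathstart \<gamma> = p" "pathfinish \<gamma> = q"
    "path_image \<gamma> \<subseteq> D" "path_image \<gamma> \<subseteq> H \<union> {p, q}"
  using assms homotopic_paths_imp_pathstart[of D \<gamma>] homotopic_paths_imp_pathfinish[of D \<gamma>]
    homotopic_paths_imp_subset[of D \<gamma>]
  by (auto simp: detour_def valid_path_imp_path)

lemma detour_contour_integral:
  assumes "detour D H p q \<gamma>" "open D" "h holomorphic_on D"
  shows "contour_integral \<gamma> h = contour_integral (linepath p q) h"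
  using assms Cauchy_theorem_homotopic_paths[of D \<gamma> "linepath p q" h]
  by (simp add: detour_def)

lemma detour_winding_number:
  assumes "detour D H p q \<gamma>" "z \<notin> D"
  shows "winding_number \<gamma> z = winding_number (linepath p q) z"
proof (rule winding_number_homotopic_paths)
  show "homotopic_paths (- {z}) \<gamma> (linepath p q)"
    using assms by (auto simp: detour_def intro: homotopic_paths_subset)
qed

lemma detour_between_cuts_avoids_lattice:
  assumes "N > 0" "H \<inter> lattice N = {}"
    and "detour D H (of_real (lower_cut a N)) (of_real (upper_cut b N)) \<gamma>"
  shows "path_image \<gamma> \<inter> lattice N = {}"
  using assms(2) detourD(6)[OF assms(3)] half_lattice_notin_lattice[OF assms(1)]
  by (auto simp: lower_cut_def upper_cut_def)

lemma winding_number_detour_loop_notin: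
  assumes "detour D H p q \<gamma>u" "detour D H' p q \<gamma>l" "z \<notin> D"
  shows "winding_number (\<gamma>l +++ reversepath \<gamma>u) z = 0"
proof -
  have "winding_number (\<gamma>l +++ reversepath \<gamma>u) z = winding_number \<gamma>l z - winding_number \<gamma>u z"
    using detourD[OF assms(1)] detourD[OF assms(2)] assms(3) by (intro winding_number_join_reversepath) auto
  then show ?thesis
    using detour_winding_number[OF assms(1,3)] detour_winding_number[OF assms(2,3)] by simp
qed

lemma winding_number_detour_loop_lattice:
  fixes a b :: real
  assumes N: "N > 0" and ab: "a \<le> b"
    and up: "detour D {z. 0 < Im z} (of_real (lower_cut a N)) (of_real (upper_cut b N)) \<gamma>u"
    and low: "detour D {z. Im z < 0} (of_real (lower_cut a N)) (of_real (upper_cut b N)) \<gamma>l"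
  shows "winding_number (\<gamma>l +++ reversepath \<gamma>u) (of_real (real_of_int k / real N))
           = (if a \<le> real_of_int k / real N \<and> real_of_int k / real N \<le> b then 1 else 0)"
proof -
  define x where "x = real_of_int k / real N"
  have x_ne: "x \<noteq> lower_cut a N" "x \<noteq> upper_cut b N"
    using lattice_ne_half_lattice[OF N] by (auto simp: x_def lower_cut_def upper_cut_def)
  have l: "path_image \<gamma>l \<subseteq> {z. Im z \<le> 0} - {of_real x}"
    using detourD(6)[OF low] x_ne by auto
  have u: "path_image \<gamma>u \<subseteq> {z. 0 \<le> Im z} - {of_real x}"
    using detourD(6)[OF up] x_ne by auto
  have "winding_number \<gamma>l x - winding_number \<gamma>u x = (if a \<le> x \<and> x \<le> b then 1 else 0)"
  proof (cases "a \<le> x \<and> x \<le> b")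
    case True
    then have "lower_cut a N < x" "x < upper_cut b N"
      using lower_cut_less_iff[OF N, of a k] less_upper_cut_iff[OF N, of k b] by (auto simp: x_def)
    with True show ?thesis
      using l u detourD[OF low] detourD[OF up] by (simp add: winding_number_lower_minus_upper_inside)
  next
    case False
    then have "x < lower_cut a N \<or> upper_cut b N < x"
      using lower_cut_less_iff[OF N, of a k] less_upper_cut_iff[OF N, of k b] x_ne
      unfolding x_def by linarith
    then have "x \<notin> closed_segment (lower_cut a N) (upper_cut b N)"
      using lower_cut_le_upper_cut[OF N ab] by (auto simp: closed_segment_eq_real_ivl)
    with False show ?thesis
      using l u detourD[OF low] detourD[OF up] by (simp add: winding_number_lower_minus_upper_outside)
  qed
  moreover have "winding_number (\<gamma>l +++ reversepath \<gamma>u) x = winding_number \<gamma>l x - winding_number \<gamma>u x"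
    using l u detourD[OF low] detourD[OF up] by (intro winding_number_join_reversepath) auto
  ultimately show ?thesis by (simp add: x_def)
qed

lemma residue_div_simple_zero:
  fixes F g :: "complex \<Rightarrow> complex"
  assumes S: "open S" "p \<in> S" and F: "F holomorphic_on S"
    and hol: "(\<lambda>w. F w / g w) holomorphic_on (S - {p})"
    and dg: "(g has_field_derivative g') (at p)" and gp: "g p = 0" and g': "g' \<noteq> 0"
  shows "residue (\<lambda>w. F w / g w) p = F p / g'"
proof (rule residue_simple'[OF S hol])
  have "isCont F p"
    using F S holomorphic_on_imp_continuous_on continuous_on_eq_continuous_at by blast
  moreover have "((\<lambda>w. (g w - g p) / (w - p)) \<longlongrightarrow> g') (at p)"
    using dg by (simp add: has_field_derivative_iff)
  ultimately have "((\<lambda>w. F w * inverse ((g w - g p) / (w - p))) \<longlongrightarrow> F p * inverse g') (at p)"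
    using g' by (intro tendsto_mult tendsto_inverse) (auto simp: isCont_def)
  then show "((\<lambda>w. F w / g w * (w - p)) \<longlongrightarrow> F p / g') (at p)"
    by (simp add: gp inverse_divide divide_inverse mult.assoc)
qed

lemma residue_div_exp_lattice:
  assumes N: "N > 0" and S: "open S" "z \<in> S" and f: "f holomorphic_on S" and z: "z \<in> lattice N"
  shows "residue (\<lambda>w. f w / (exp (2 * of_real pi * \<i> * of_nat N * w) - 1)) z
           = f z / (2 * of_real pi * \<i> * of_nat N)"
proof -
  define S0 where "S0 = S \<inter> ball z (1 / real N)"
  have S0: "open S0" "z \<in> S0" using S N by (auto simp: S0_def)
  have "exp (2 * of_real pi * \<i> * of_nat N * w) \<noteq> 1" if "w \<in> S0 - {z}" for w
  proof
    assume "exp (2 * of_real pi * \<i> * of_nat N * w) = 1"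
    then have "w \<in> lattice N" using exp_2pi_eq_1_iff_lattice[OF N] by blast
    then have "dist w z \<ge> 1 / real N" using dist_lattice_ge[OF N _ z] that by blast
    then show False using that by (simp add: S0_def dist_commute)
  qed
  then have hol: "(\<lambda>w. f w / (exp (2 * of_real pi * \<i> * of_nat N * w) - 1)) holomorphic_on S0 - {z}"
    using f by (intro holomorphic_intros holomorphic_on_subset[OF f]) (auto simp: S0_def)
  have Ez: "exp (2 * of_real pi * \<i> * of_nat N * z) = 1"
    using exp_2pi_eq_1_iff_lattice[OF N] z by blast
  have "((\<lambda>w. exp (2 * of_real pi * \<i> * of_nat N * w) - 1) has_field_derivative
          2 * of_real pi * \<i> * of_nat N) (at z)"
    using Ez by (auto intro!: derivative_eq_intros)
  from residue_div_simple_zero[OF S0 holomorphic_on_subset[OF f] hol this] Ez N show ?thesis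
    by (simp add: S0_def)
qed

lemma div_exp_minus_one_reflect:
  fixes u w :: complex
  assumes "exp w \<noteq> 1"
  shows "u / (exp w - 1) = - u - u / (exp (- w) - 1)"
proof -
  define e where "e = exp w"
  have em: "exp (- w) = 1 / e" by (simp add: e_def exp_minus inverse_eq_divide)
  have "e \<noteq> 0" "e - 1 \<noteq> 0" "1 - e \<noteq> 0" using assms by (auto simp: e_def)
  then show ?thesis
    unfolding em e_def[symmetric] by (simp add: field_simps)
qed

lemma contour_integral_detour_loop_residues:
  fixes g :: "complex \<Rightarrow> complex" and a b :: real and N :: nat
  defines "P \<equiv> (\<lambda>k. complex_of_real (real_of_int k / real N)) `
                 {k::int. a \<le> real_of_int k / real N \<and> real_of_int k / real N \<le> b}"
  assumes N: "N > 0" and ab: "a \<le> b" and D: "open D" "connected D" and g: "g holomorphic_on D - lattice N"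
    and up: "detour D {z. 0 < Im z} (of_real (lower_cut a N)) (of_real (upper_cut b N)) \<gamma>u"
    and low: "detour D {z. Im z < 0} (of_real (lower_cut a N)) (of_real (upper_cut b N)) \<gamma>l"
  shows "contour_integral (\<gamma>l +++ reversepath \<gamma>u) g
           = 2 * pi * \<i> * (\<Sum>z\<in>P. winding_number (\<gamma>l +++ reversepath \<gamma>u) z * residue g z)"
proof (rule Residue_theorem)
  define S where "S = D - (lattice N - P)"
  have P: "P \<subseteq> lattice N" by (auto simp: P_def lattice_def)
  show "finite P" using finite_lattice_points[OF N] by (simp add: P_def)
  have "closed (lattice N - P)"
    using closed_subset_lattice[OF N] by blast
  then show "open (D - (lattice N - P))" "connected (D - (lattice N - P))"
    using D by (auto simp: lattice_def intro!: connected_open_diff_countable)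
  have S_diff: "D - (lattice N - P) - P = D - lattice N" using P by auto
  then show "g holomorphic_on D - (lattice N - P) - P" using g by simp
  have "{z. 0 < Im z} \<inter> lattice N = {}" "{z. Im z < 0} \<inter> lattice N = {}"
    using Im_lattice by fastforce+
  then have "path_image \<gamma>u \<inter> lattice N = {}" "path_image \<gamma>l \<inter> lattice N = {}"
    using detour_between_cuts_avoids_lattice[OF N _ up] detour_between_cuts_avoids_lattice[OF N _ low]
    by blast+
  then show "valid_path (\<gamma>l +++ reversepath \<gamma>u)" "pathfinish (\<gamma>l +++ reversepath \<gamma>u) = pathstart (\<gamma>l +++ reversepath \<gamma>u)"
    "path_image (\<gamma>l +++ reversepath \<gamma>u) \<subseteq> D - (lattice N - P) - P"
    using detourD[OF up] detourD[OF low] by (auto simp: S_diff path_image_join)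
  show "\<forall>z. z \<notin> D - (lattice N - P) \<longrightarrow> winding_number (\<gamma>l +++ reversepath \<gamma>u) z = 0"
  proof (intro allI impI)
    fix z assume z: "z \<notin> D - (lattice N - P)"
    show "winding_number (\<gamma>l +++ reversepath \<gamma>u) z = 0"
    proof (cases "z \<in> D")
      case False
      then show ?thesis by (rule winding_number_detour_loop_notin[OF up low])
    next
      case True
      then obtain k where "z = of_real (real_of_int k / real N)" "\<not> (a \<le> real_of_int k / real N \<and> real_of_int k / real N \<le> b)"
        using z unfolding lattice_def P_def by blast
      then show ?thesis using winding_number_detour_loop_lattice[OF N ab up low, of k] by simp
    qed
  qed
qed

lemma contour_integral_detour_loop:
  fixes f :: "complex \<Rightarrow> complex" and a b :: real
  assumes N: "N > 0" and ab: "a \<le> b" and D: "open D" "connected D" and f: "f holomorphic_on D"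
    and seg: "complex_of_real ` {a..b} \<subseteq> D"
    and up: "detour D {z. 0 < Im z} (of_real (lower_cut a N)) (of_real (upper_cut b N)) \<gamma>u"
    and low: "detour D {z. Im z < 0} (of_real (lower_cut a N)) (of_real (upper_cut b N)) \<gamma>l"
  shows "contour_integral (\<gamma>l +++ reversepath \<gamma>u) (\<lambda>z. f z / (exp (2 * of_real pi * \<i> * of_nat N * z) - 1))
    = (1 / of_nat N) * (\<Sum>k\<in>{k::int. a \<le> real_of_int k / real N \<and> real_of_int k / real N \<le> b}.
                          f (of_real (real_of_int k / real N)))"
proof -
  define lat where "lat k = complex_of_real (real_of_int k / real N)" for k :: int
  define I where "I = {k::int. a \<le> real_of_int k / real N \<and> real_of_int k / real N \<le> b}"
  define g where "g = (\<lambda>z. f z / (exp (2 * of_real pi * \<i> * of_nat N * z) - 1))"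
  have "g holomorphic_on D - lattice N"
    unfolding g_def using exp_2pi_eq_1_iff_lattice[OF N]
    by (intro holomorphic_intros holomorphic_on_subset[OF f]) auto
  then have "contour_integral (\<gamma>l +++ reversepath \<gamma>u) g
      = 2 * pi * \<i> * (\<Sum>z\<in>lat ` I. winding_number (\<gamma>l +++ reversepath \<gamma>u) z * residue g z)"
    unfolding lat_def I_def by (rule contour_integral_detour_loop_residues[OF N ab D _ up low])
  also have "\<dots> = 2 * pi * \<i> * (\<Sum>k\<in>I. f (lat k) / (2 * of_real pi * \<i> * of_nat N))"
  proof -
    have "inj_on lat I" using N by (auto simp: inj_on_def lat_def)
    moreover have "winding_number (\<gamma>l +++ reversepath \<gamma>u) (lat k) * residue g (lat k)
        = f (lat k) / (2 * of_real pi * \<i> * of_nat N)" if k: "k \<in> I" for k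
    proof -
      have "real_of_int k / real N \<in> {a..b}" using k by (simp add: I_def)
      then have "lat k \<in> D" "lat k \<in> lattice N"
        using seg unfolding lat_def lattice_def by blast+
      then have "residue g (lat k) = f (lat k) / (2 * of_real pi * \<i> * of_nat N)"
        unfolding g_def by (intro residue_div_exp_lattice[OF N D(1) _ f])
      moreover have "winding_number (\<gamma>l +++ reversepath \<gamma>u) (lat k) = 1"
        using k winding_number_detour_loop_lattice[OF N ab up low, of k] by (simp add: I_def lat_def)
      ultimately show ?thesis by simp
    qed
    ultimately show ?thesis by (simp add: sum.reindex)
  qed
  also have "\<dots> = (1 / of_nat N) * (\<Sum>k\<in>I. f (lat k))"
    by (simp add: sum_divide_distrib[symmetric])
  finally show ?thesis by (simp add: g_def I_def lat_def)
qed

lemma lattice_sum_contour_formula: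
  fixes f :: "complex \<Rightarrow> complex" and a b :: real
  assumes N: "N > 0" and ab: "a \<le> b" and D: "open D" "connected D" and f: "f holomorphic_on D"
    and seg: "complex_of_real ` {a..b} \<subseteq> D"
    and up: "detour D {z. 0 < Im z} (of_real (lower_cut a N)) (of_real (upper_cut b N)) \<gamma>u"
    and low: "detour D {z. Im z < 0} (of_real (lower_cut a N)) (of_real (upper_cut b N)) \<gamma>l"
  shows "(1 / of_nat N) * (\<Sum>k\<in>{k::int. a \<le> real_of_int k / real N \<and> real_of_int k / real N \<le> b}.
                              f (of_real (real_of_int k / real N)))
    = contour_integral (linepath (of_real (lower_cut a N)) (of_real (upper_cut b N))) f
      + contour_integral \<gamma>l (\<lambda>z. f z / (exp (2 * of_real pi * \<i> * of_nat N * z) - 1))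
      + contour_integral \<gamma>u (\<lambda>z. f z / (exp (- 2 * of_real pi * \<i> * of_nat N * z) - 1))"
proof -
  define g where "g = (\<lambda>z. f z / (exp (2 * of_real pi * \<i> * of_nat N * z) - 1))"
  define g' where "g' = (\<lambda>z. f z / (exp (- 2 * of_real pi * \<i> * of_nat N * z) - 1))"
  define \<Omega> where "\<Omega> = D - lattice N"
  have \<Omega>: "open \<Omega>" using D(1) closed_subset_lattice[OF N] by (auto simp: \<Omega>_def)
  have E: "exp (2 * of_real pi * \<i> * of_nat N * z) \<noteq> 1" if "z \<in> \<Omega>" for z
    using that exp_2pi_eq_1_iff_lattice[OF N] by (auto simp: \<Omega>_def)
  then have hol: "g holomorphic_on \<Omega>" "g' holomorphic_on \<Omega>" "f holomorphic_on \<Omega>"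
    using holomorphic_on_subset[OF f] unfolding g_def g'_def \<Omega>_def
    by (auto intro!: holomorphic_intros simp: exp_minus field_simps)
  have "{z. 0 < Im z} \<inter> lattice N = {}" "{z. Im z < 0} \<inter> lattice N = {}"
    using Im_lattice by fastforce+
  then have im: "path_image \<gamma>u \<subseteq> \<Omega>" "path_image \<gamma>l \<subseteq> \<Omega>"
    using detourD(5)[OF up] detourD(5)[OF low]
      detour_between_cuts_avoids_lattice[OF N _ up] detour_between_cuts_avoids_lattice[OF N _ low]
    by (auto simp: \<Omega>_def)
  note int = contour_integrable_holomorphic_simple[OF _ \<Omega> detourD(1)[OF up] im(1)]
             contour_integrable_holomorphic_simple[OF _ \<Omega> detourD(1)[OF low] im(2)]
  have "contour_integral \<gamma>u g = contour_integral \<gamma>u (\<lambda>z. - f z - g' z)"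
    using im(1) E div_exp_minus_one_reflect[of "2 * of_real pi * \<i> * of_nat N * _"]
    by (intro contour_integral_eq) (auto simp: g_def g'_def)
  also have "\<dots> = - contour_integral (linepath (of_real (lower_cut a N)) (of_real (upper_cut b N))) f
                  - contour_integral \<gamma>u g'"
  proof -
    have "f contour_integrable_on \<gamma>u" "g' contour_integrable_on \<gamma>u" using int(1) hol by blast+
    then show ?thesis
      using contour_integral_diff[OF contour_integrable_neg] detour_contour_integral[OF up D(1) f]
        contour_integral_neg[of \<gamma>u f] by simp
  qed
  finally have "contour_integral (\<gamma>l +++ reversepath \<gamma>u) g
      = contour_integral \<gamma>l g + contour_integral (linepath (of_real (lower_cut a N)) (of_real (upper_cut b N))) f
        + contour_integral \<gamma>u g'"
    using int hol detourD[OF up] detourD[OF low]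
    by (simp add: contour_integral_join contour_integrable_reversepath contour_integral_reversepath)
  then show ?thesis
    using contour_integral_detour_loop[OF N ab D f seg up low] by (simp add: g_def g'_def)
qed

definition exponentially_small :: "(nat \<Rightarrow> complex) \<Rightarrow> bool" where
  "exponentially_small x \<longleftrightarrow> (\<exists>\<epsilon>>0. \<exists>C. \<forall>\<^sub>F N in sequentially. norm (x N) \<le> C * exp (- \<epsilon> * real N))"

lemma exponentially_smallI:
  assumes "0 < c" "\<forall>\<^sub>F N in sequentially. norm (x N) \<le> L * exp (- c * real N)"
  shows "exponentially_small x"
  using assms by (auto simp: exponentially_small_def)

lemma exp_decay_le_abs:
  assumes "\<epsilon> \<le> c"
  shows "L * exp (- c * real N) \<le> \<bar>L\<bar> * exp (- \<epsilon> * real N)"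
proof -
  have "exp (- c * real N) \<le> exp (- \<epsilon> * real N)"
    using assms by (simp add: mult_right_mono)
  then show ?thesis
    by (meson abs_ge_self abs_ge_zero exp_ge_zero mult_mono order_trans)
qed

lemma exponentially_small_add:
  assumes "exponentially_small x" "exponentially_small y"
  shows "exponentially_small (\<lambda>N. x N + y N)"
proof -
  obtain c L c' L' where c: "0 < c" "0 < c'"
    and bounds: "\<forall>\<^sub>F N in sequentially. norm (x N) \<le> L * exp (- c * real N)"
      "\<forall>\<^sub>F N in sequentially. norm (y N) \<le> L' * exp (- c' * real N)"
    using assms by (auto simp: exponentially_small_def)
  from bounds have "\<forall>\<^sub>F N in sequentially. norm (x N + y N) \<le> (\<bar>L\<bar> + \<bar>L'\<bar>) * exp (- min c c' * real N)"
  proof eventually_elim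
    case (elim N)
    then show ?case
      using norm_triangle_ineq[of "x N" "y N"] exp_decay_le_abs[of "min c c'" c L N]
        exp_decay_le_abs[of "min c c'" c' L' N]
      by (simp add: distrib_right)
  qed
  then show ?thesis using c by (intro exponentially_smallI[of "min c c'"]) auto
qed

lemma exponentially_small_eventually_eq:
  assumes "exponentially_small x" "\<forall>\<^sub>F N in sequentially. y N = x N"
  shows "exponentially_small y"
proof -
  obtain c L where "0 < c" "\<forall>\<^sub>F N in sequentially. norm (x N) \<le> L * exp (- c * real N)"
    using assms(1) by (auto simp: exponentially_small_def)
  with assms(2) show ?thesis
    by (intro exponentially_smallI[of c]) (auto elim: eventually_elim2)
qed

lemma eventually_exp_ge_2:
  assumes "0 < \<kappa>"
  shows "\<forall>\<^sub>F N in sequentially. 2 \<le> exp (\<kappa> * real N)"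
  using eventually_inverse_real_less[OF assms] eventually_gt_at_top[of 0]
proof eventually_elim
  case (elim N)
  then have "1 \<le> \<kappa> * real N" using assms by (simp add: field_simps)
  then show ?case using exp_ge_add_one_self[of "\<kappa> * real N"] by linarith
qed

lemma norm_exp_of_nat_mult_le:
  assumes "Re w \<le> - c"
  shows "norm (exp (of_nat N * w)) \<le> exp (- c * real N)"
  using mult_left_mono[OF assms, of "real N"] by (simp add: algebra_simps)

lemma norm_upper_kernel_quotient_le:
  fixes N :: nat and z w :: complex
  assumes X: "2 \<le> exp (2 * pi * real N * Im z)" and w: "Re w \<le> 2 * pi * Im z - c"
  shows "norm (exp (of_nat N * w) / (exp (- 2 * of_real pi * \<i> * of_nat N * z) - 1)) \<le> 2 * exp (- c * real N)"
proof -
  define X where "X = exp (2 * pi * real N * Im z)"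
  have "norm (exp (- 2 * of_real pi * \<i> * of_nat N * z)) = X" by (simp add: X_def)
  then have den: "X / 2 \<le> norm (exp (- 2 * of_real pi * \<i> * of_nat N * z) - 1)"
    using norm_triangle_ineq2[of "exp (- 2 * of_real pi * \<i> * of_nat N * z)" 1] X by (simp add: X_def)
  have "norm (exp (of_nat N * w)) = exp (real N * Re w)" by simp
  also have "\<dots> \<le> exp (real N * (2 * pi * Im z - c))"
    using w by (simp add: mult_left_mono)
  also have "\<dots> = X * exp (- c * real N)" by (simp add: X_def algebra_simps flip: exp_add)
  finally have num: "norm (exp (of_nat N * w)) \<le> X * exp (- c * real N)" .
  have "norm (exp (of_nat N * w) / (exp (- 2 * of_real pi * \<i> * of_nat N * z) - 1))
      \<le> X * exp (- c * real N) / (X / 2)"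
    unfolding norm_divide using num den X by (intro frac_le) (auto simp: X_def)
  also have "\<dots> = 2 * exp (- c * real N)" using X by (simp add: X_def field_simps)
  finally show ?thesis .
qed

lemma norm_upper_kernel_quotient_half_lattice_le:
  fixes N :: nat and w :: complex
  assumes N: "N > 0" and w: "Re w \<le> 2 * pi * t - c"
  shows "norm (exp (of_nat N * w) / (exp (- 2 * of_real pi * \<i> * of_nat N *
                (of_real (half_lattice N j) + \<i> * of_real t)) - 1)) \<le> exp (- c * real N)"
proof -
  define X where "X = exp (2 * pi * real N * t)"
  have "- 2 * of_real pi * \<i> * of_nat N * (of_real (half_lattice N j) + \<i> * of_real t)
        = \<i> * (of_int (- j - 1) * (of_real pi * 2)) + \<i> * of_real pi + of_real (2 * pi * real N * t)"
    using N by (simp add: half_lattice_def complex_eq_iff field_simps)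
  then have E: "exp (- 2 * of_real pi * \<i> * of_nat N * (of_real (half_lattice N j) + \<i> * of_real t))
      = - of_real X"
    by (simp only: exp_add exp_2pi_1_int exp_pi_i' exp_of_real X_def) simp
  have "- complex_of_real X - 1 = - complex_of_real (X + 1)" by simp
  then have den: "norm (exp (- 2 * of_real pi * \<i> * of_nat N * (of_real (half_lattice N j) + \<i> * of_real t)) - 1)
      = X + 1"
    unfolding E by (simp only: norm_minus_cancel norm_of_real) (simp add: X_def add_pos_pos)
  have "norm (exp (of_nat N * w)) = exp (real N * Re w)" by simp
  also have "\<dots> \<le> exp (real N * (2 * pi * t - c))"
    using w by (simp add: mult_left_mono)
  also have "\<dots> = X * exp (- c * real N)" by (simp add: X_def algebra_simps flip: exp_add)
  finally have "norm (exp (of_nat N * w)) / (X + 1) \<le> X * exp (- c * real N) / (X + 1)"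
    by (rule divide_right_mono) (simp add: X_def add_nonneg_nonneg)
  also have "\<dots> \<le> exp (- c * real N)"
    by (simp add: X_def divide_le_eq add_pos_pos algebra_simps)
  finally show ?thesis unfolding norm_divide den .
qed

lemma holomorphic_on_upper_kernel_quotient:
  assumes "N > 0" "f holomorphic_on S"
  shows "(\<lambda>z. f z / (exp (- 2 * of_real pi * \<i> * of_nat N * z) - 1)) holomorphic_on S - lattice N"
  using assms exp_minus_2pi_eq_1_iff_lattice[OF assms(1)]
  by (intro holomorphic_intros holomorphic_on_subset[OF assms(2)]) auto

section \<open>Deforming the segment into the upper half-plane\<close>

lemma compact_uniform_margin:
  fixes \<phi> :: "'a::metric_space \<Rightarrow> real"
  assumes K: "compact K" "K \<subseteq> D" and D: "open D" and \<phi>: "continuous_on D \<phi>"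
    and neg: "\<And>z. z \<in> K \<Longrightarrow> \<phi> z < 0"
  obtains m r where "m > 0" "r > 0" "\<And>x z. x \<in> K \<Longrightarrow> z \<in> ball x r \<Longrightarrow> z \<in> D \<and> \<phi> z < - m"
proof (cases "K = {}")
  case True
  then show ?thesis using that[of 1 1] by simp
next
  case False
  obtain x0 where x0: "x0 \<in> K" "\<And>y. y \<in> K \<Longrightarrow> \<phi> y \<le> \<phi> x0"
    using continuous_attains_sup[OF K(1) False continuous_on_subset[OF \<phi> K(2)]] by blast
  define m where "m = - \<phi> x0 / 2"
  have m: "m > 0" using neg[OF x0(1)] by (simp add: m_def)
  obtain U where U: "open U" "U \<inter> D = {z \<in> D. \<phi> z < - m}"
    using open_Collect_less_Int[OF \<phi> continuous_on_const] by blast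
  have "K \<subseteq> {z \<in> D. \<phi> z < - m}"
    using K(2) x0 m by (force simp: m_def)
  moreover have "open {z \<in> D. \<phi> z < - m}"
    using U D by (metis open_Int)
  ultimately obtain r where "r > 0" "(\<Union>x\<in>K. ball x r) \<subseteq> {z \<in> D. \<phi> z < - m}"
    using compact_subset_open_imp_ball_epsilon_subset[OF K(1)] by metis
  then show ?thesis using that[OF m] by blast
qed

lemma uniform_limit_eventually_Re_less:
  assumes "uniform_limit D \<psi>s \<psi> sequentially" "e > 0"
  shows "\<forall>\<^sub>F N in sequentially. \<forall>z\<in>D. Re (\<psi>s N z) < Re (\<psi> z) + e"
  using uniform_limitD[OF assms]
proof eventually_elim
  case (elim N)
  show ?case
  proof
    fix z assume "z \<in> D"
    then have "norm (\<psi>s N z - \<psi> z) < e"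
      using elim by (simp add: dist_norm)
    then have "Re (\<psi>s N z - \<psi> z) < e"
      using abs_le_D1[OF abs_Re_le_cmod] order.strict_trans1 by blast
    then show "Re (\<psi>s N z) < Re (\<psi> z) + e" by simp
  qed
qed

lemma eventually_Re_le_of_margin:
  assumes "uniform_limit D \<psi>s \<psi> sequentially" "0 < m" "V \<subseteq> D" "\<forall>z\<in>V. Re (\<psi> z) < g z - m"
  shows "\<forall>\<^sub>F N in sequentially. \<forall>z\<in>V. Re (\<psi>s N z) \<le> g z - m / 2"
  using uniform_limit_eventually_Re_less[OF assms(1) half_gt_zero[OF assms(2)]]
proof eventually_elim
  case (elim N)
  show ?case
  proof
    fix z assume "z \<in> V"
    then show "Re (\<psi>s N z) \<le> g z - m / 2"
      using elim assms(3,4) by fastforce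
  qed
qed

lemma convex_neighbourhood_real_segment:
  fixes A B :: real
  assumes D: "open D" and seg: "complex_of_real ` {A..B} \<subseteq> D" and AB: "A \<le> B"
  obtains K \<delta> where "convex K" "open K" "K \<subseteq> D" "\<delta> > 0"
    "\<And>x y. A - \<delta> < x \<Longrightarrow> x < B + \<delta> \<Longrightarrow> \<bar>y\<bar> < \<delta> \<Longrightarrow> complex_of_real x + \<i> * of_real y \<in> K"
proof -
  have "compact (complex_of_real ` {A..B})"
    by (intro compact_continuous_image continuous_intros) auto
  then obtain r where r: "r > 0" "(\<Union>x\<in>complex_of_real ` {A..B}. ball x r) \<subseteq> D"
    using compact_subset_open_imp_ball_epsilon_subset[OF _ D seg] by blast
  define \<delta> where "\<delta> = r / 2"
  define K where "K = {z. A - \<delta> < Re z} \<inter> {z. Re z < B + \<delta>} \<inter> {z. - \<delta> < Im z} \<inter> {z. Im z < \<delta>}"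
  have "convex K" "open K" unfolding K_def
    by (intro convex_Int convex_halfspace_Re_gt convex_halfspace_Re_lt convex_halfspace_Im_gt
        convex_halfspace_Im_lt open_Int open_halfspace_Re_gt open_halfspace_Re_lt open_halfspace_Im_gt
        open_halfspace_Im_lt)+
  moreover have "K \<subseteq> D"
  proof
    fix z assume z: "z \<in> K"
    define x where "x = max A (min B (Re z))"
    have "x \<in> {A..B}" using AB by (auto simp: x_def)
    moreover have "norm (z - complex_of_real x) \<le> \<bar>Re z - x\<bar> + \<bar>Im z\<bar>"
      using cmod_le[of "z - complex_of_real x"] by simp
    then have "z \<in> ball (complex_of_real x) r"
      using z AB by (auto simp: x_def K_def \<delta>_def dist_norm norm_minus_commute)
    ultimately show "z \<in> D" using r(2) by blast
  qed
  moreover have "complex_of_real x + \<i> * of_real y \<in> K" if "A - \<delta> < x" "x < B + \<delta>" "\<bar>y\<bar> < \<delta>" for x y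
    using that by (auto simp: K_def abs_less_iff)
  moreover have "\<delta> > 0" using r(1) by (simp add: \<delta>_def)
  ultimately show ?thesis using that by blast
qed

lemma homotopic_paths_shift:
  fixes D :: "complex set"
  assumes hom: "homotopic_paths D p q" and D: "open D"
  obtains d where "d > 0" "\<And>c. norm c < d \<Longrightarrow> homotopic_paths D (\<lambda>t. p t + c) (\<lambda>t. q t + c)"
proof -
  from hom obtain h where h: "continuous_on ({0..1} \<times> {0..1}) h" "h \<in> ({0..1} \<times> {0..1}) \<rightarrow> D"
     "\<forall>x \<in> {0..1}. h(0,x) = p x" "\<forall>x \<in> {0..1}. h(1,x) = q x"
     "\<forall>t \<in> {0..1::real}. pathstart(h \<circ> Pair t) = pathstart p \<and> pathfinish(h \<circ> Pair t) = pathfinish p"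
    unfolding homotopic_paths by blast
  define K where "K = h ` ({0..1} \<times> {0..1})"
  have "compact K" unfolding K_def
    by (intro compact_continuous_image h compact_Times compact_Icc)
  moreover have "K \<subseteq> D" unfolding K_def using h(2) by blast
  ultimately obtain d where d: "d > 0" "(\<Union>x\<in>K. ball x d) \<subseteq> D"
    using compact_subset_open_imp_ball_epsilon_subset D by blast
  have hK: "homotopic_paths K p q" unfolding homotopic_paths
    using h K_def by (intro exI[of _ h]) auto
  show ?thesis
  proof (rule that[OF d(1)])
    fix c :: complex assume c: "norm c < d"
    have "homotopic_paths ((\<lambda>z. z + c) ` K) ((\<lambda>z. z + c) \<circ> p) ((\<lambda>z. z + c) \<circ> q)"
      by (rule homotopic_paths_continuous_image[OF hK]) (auto intro!: continuous_intros)
    moreover have "(\<lambda>z. z + c) ` K \<subseteq> D"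
      using c d(2) by (force simp: dist_norm)
    ultimately show "homotopic_paths D (\<lambda>t. p t + c) (\<lambda>t. q t + c)"
      by (auto intro: homotopic_paths_subset simp: o_def)
  qed
qed

lemma lifted_valid_path:
  fixes C :: "real \<Rightarrow> complex"
  assumes C: "path C" "path_image C \<subseteq> {z. 0 \<le> Im z}" and \<eta>: "\<eta> > 0"
    and S: "(\<Union>x\<in>path_image C. ball x (2 * \<eta>)) \<subseteq> S"
  obtains M where "valid_path M"
    "pathstart M = pathstart C + \<i> * of_real \<eta>" "pathfinish M = pathfinish C + \<i> * of_real \<eta>"
    "path_image M \<subseteq> (\<Union>x\<in>path_image C. ball x (2 * \<eta>)) \<inter> {z. \<eta> / 2 < Im z}"
    "homotopic_paths S M (\<lambda>t. C t + \<i> * of_real \<eta>)"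
proof -
  obtain P where P: "polynomial_function P" "pathstart P = pathstart C" "pathfinish P = pathfinish C"
      "\<And>t. t \<in> {0..1} \<Longrightarrow> norm (P t - C t) < \<eta> / 2"
    using path_approx_polynomial_function[OF C(1), of "\<eta> / 2"] \<eta> by auto
  define M where "M = (\<lambda>t. P t + \<i> * of_real \<eta>)"
  have valid: "valid_path M"
    unfolding M_def using P(1) by (intro valid_path_polynomial_function) auto
  have near: "M t \<in> ball (C t) (2 * \<eta>)" "C t + \<i> * of_real \<eta> \<in> ball (C t) (2 * \<eta>)" "C t \<in> path_image C"
    if "t \<in> {0..1}" for t
  proof -
    have "norm (M t - C t) \<le> norm (P t - C t) + \<eta>"
      using norm_triangle_ineq[of "P t - C t" "\<i> * of_real \<eta>"] \<eta> by (simp add: M_def norm_mult algebra_simps)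
    then have "norm (M t - C t) < 2 * \<eta>"
      using P(4)[OF that] \<eta> by linarith
    then show "M t \<in> ball (C t) (2 * \<eta>)"
      by (simp add: dist_norm norm_minus_commute)
    show "C t + \<i> * of_real \<eta> \<in> ball (C t) (2 * \<eta>)" "C t \<in> path_image C"
      using \<eta> that by (auto simp: dist_norm norm_mult path_image_def)
  qed
  have "Im (C t) - Im (P t) < \<eta> / 2" if "t \<in> {0..1}" for t
    using abs_Im_le_cmod[of "P t - C t"] P(4)[OF that] by simp
  then have "path_image M \<subseteq> (\<Union>x\<in>path_image C. ball x (2 * \<eta>)) \<inter> {z. \<eta> / 2 < Im z}"
    using near C(2) by (force simp: path_image_def M_def)
  moreover have "homotopic_paths S M (\<lambda>t. C t + \<i> * of_real \<eta>)"
  proof (rule homotopic_paths_linear)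
    show "path M" using valid by (rule valid_path_imp_path)
    show "path (\<lambda>t. C t + \<i> * of_real \<eta>)"
      using C(1) unfolding path_def by (intro continuous_intros)
    show "closed_segment (M t) (C t + \<i> * of_real \<eta>) \<subseteq> S" if "t \<in> {0..1}" for t
      using closed_segment_subset[OF near(1,2)[OF that] convex_ball] near(3)[OF that] S by blast
  qed (use P(2,3) in \<open>simp_all add: M_def pathstart_def pathfinish_def\<close>)
  ultimately show ?thesis
    using that valid P(2,3) by (simp add: M_def pathstart_def pathfinish_def)
qed

lemma lifted_path_homotopic:
  fixes C :: "real \<Rightarrow> complex"
  assumes C: "path C" "path_image C \<subseteq> {z. 0 \<le> Im z}" "homotopic_paths D C (linepath u v)"
    and D: "open D" and \<epsilon>: "0 < \<epsilon>" "(\<Union>x\<in>path_image C. ball x \<epsilon>) \<subseteq> D"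
  obtains \<eta> M where "0 < \<eta>" "2 * \<eta> < \<epsilon>" "valid_path M"
    "pathstart M = u + \<i> * of_real \<eta>" "pathfinish M = v + \<i> * of_real \<eta>"
    "path_image M \<subseteq> (\<Union>x\<in>path_image C. ball x \<epsilon>) \<inter> {z. \<eta> / 2 < Im z}"
    "homotopic_paths D M (linepath (u + \<i> * of_real \<eta>) (v + \<i> * of_real \<eta>))"
proof -
  obtain d where d: "d > 0"
    "\<And>w. norm w < d \<Longrightarrow> homotopic_paths D (\<lambda>t. C t + w) (\<lambda>t. linepath u v t + w)"
    using homotopic_paths_shift[OF C(3) D] by blast
  define \<eta> where "\<eta> = min \<epsilon> d / 4"
  have \<eta>: "0 < \<eta>" "2 * \<eta> < \<epsilon>" "\<eta> < d" using \<epsilon>(1) d(1) by (auto simp: \<eta>_def)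
  have balls: "(\<Union>x\<in>path_image C. ball x (2 * \<eta>)) \<subseteq> (\<Union>x\<in>path_image C. ball x \<epsilon>)"
    using \<eta>(2) by auto
  have "(\<Union>x\<in>path_image C. ball x (2 * \<eta>)) \<subseteq> D"
    using balls \<epsilon>(2) by (rule order_trans)
  then obtain M where M: "valid_path M" "pathstart M = pathstart C + \<i> * of_real \<eta>"
    "pathfinish M = pathfinish C + \<i> * of_real \<eta>"
    "path_image M \<subseteq> (\<Union>x\<in>path_image C. ball x (2 * \<eta>)) \<inter> {z. \<eta> / 2 < Im z}"
    "homotopic_paths D M (\<lambda>t. C t + \<i> * of_real \<eta>)"
    by (rule lifted_valid_path[OF C(1,2) \<eta>(1)])
  have "homotopic_paths D (\<lambda>t. C t + \<i> * of_real \<eta>) (\<lambda>t. linepath u v t + \<i> * of_real \<eta>)"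
    using d(2)[of "\<i> * of_real \<eta>"] \<eta> by (simp add: norm_mult)
  moreover have "(\<lambda>t. linepath u v t + \<i> * of_real \<eta>) = linepath (u + \<i> * of_real \<eta>) (v + \<i> * of_real \<eta>)"
    by (rule ext) (simp add: linepath_def scaleR_conv_of_real algebra_simps)
  ultimately have hom: "homotopic_paths D M (linepath (u + \<i> * of_real \<eta>) (v + \<i> * of_real \<eta>))"
    using homotopic_paths_trans[OF M(5)] by simp
  have "pathstart C = u" "pathfinish C = v"
    using homotopic_paths_imp_pathstart[OF C(3)] homotopic_paths_imp_pathfinish[OF C(3)] by simp_all
  moreover have "path_image M \<subseteq> (\<Union>x\<in>path_image C. ball x \<epsilon>) \<inter> {z. \<eta> / 2 < Im z}"
    using M(4) balls by blast
  ultimately show ?thesis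
    using that[OF \<eta>(1,2) M(1) _ _ _ hom] M(2,3) by simp
qed

text \<open>On the vertical part of a hook starting at a half-lattice point, \<open>exp (-2 pi i N z)\<close> is a
  negative real number, so the kernel stays bounded by \<open>1\<close> right down to the real axis.\<close>

definition hook :: "real \<Rightarrow> real \<Rightarrow> real \<Rightarrow> real \<Rightarrow> complex" where
  "hook x y \<eta> = linepath (of_real x) (of_real x + \<i> * of_real \<eta>)
                 +++ linepath (of_real x + \<i> * of_real \<eta>) (of_real y + \<i> * of_real \<eta>)"

lemma hook_simps [simp]:
  "valid_path (hook x y \<eta>)" "path (hook x y \<eta>)" "pathstart (hook x y \<eta>) = of_real x"
  "pathfinish (hook x y \<eta>) = of_real y + \<i> * of_real \<eta>"
  by (simp_all add: hook_def valid_path_imp_path)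

lemma path_image_hook:
  "path_image (hook x y \<eta>) = closed_segment (of_real x) (of_real x + \<i> * of_real \<eta>)
     \<union> closed_segment (of_real x + \<i> * of_real \<eta>) (of_real y + \<i> * of_real \<eta>)"
  by (simp add: hook_def path_image_join)

lemma path_image_hook_upper:
  assumes "0 < \<eta>"
  shows "path_image (hook x y \<eta>) - {of_real x} \<subseteq> {z. 0 < Im z}"
  using assms by (auto simp: path_image_hook closed_segment_same_Re closed_segment_same_Im
                             closed_segment_eq_real_ivl complex_eq_iff)

lemma path_image_hook_subset_ball:
  assumes "\<bar>x - y\<bar> + \<eta> < r" "0 \<le> \<eta>"
  shows "path_image (hook x y \<eta>) \<subseteq> ball (of_real y) r"
proof -
  have "of_real x \<in> ball (complex_of_real y) r" "of_real y + \<i> * of_real \<eta> \<in> ball (complex_of_real y) r"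
    "of_real x + \<i> * of_real \<eta> \<in> ball (complex_of_real y) r"
  proof -
    have "norm (complex_of_real x + \<i> * of_real \<eta> - of_real y) \<le> \<bar>x - y\<bar> + \<eta>"
      using norm_triangle_ineq[of "of_real (x - y)" "\<i> * of_real \<eta>"] assms(2)
      by (simp add: norm_mult algebra_simps) (metis norm_of_real of_real_diff)
    then show "of_real x \<in> ball (complex_of_real y) r" "of_real y + \<i> * of_real \<eta> \<in> ball (complex_of_real y) r"
      "of_real x + \<i> * of_real \<eta> \<in> ball (complex_of_real y) r"
      using assms
      by (auto simp: dist_commute[of "of_real y"] dist_norm norm_minus_commute[of "of_real y"] norm_mult
               simp flip: of_real_diff)
  qed
  then show ?thesis
    unfolding path_image_hook by (intro Un_least closed_segment_subset convex_ball)
qed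

lemma hook_homotopic_linepath:
  assumes "\<bar>x - y\<bar> + \<eta> < r" "0 \<le> \<eta>" "ball (of_real y) r \<subseteq> D"
  shows "homotopic_paths D (hook x y \<eta>) (linepath (of_real x) (of_real y + \<i> * of_real \<eta>))"
proof -
  have "complex_of_real x \<in> ball (of_real y) r" "of_real y + \<i> * of_real \<eta> \<in> ball (of_real y) r"
    using path_image_hook_subset_ball[OF assms(1,2)] unfolding path_image_hook
    by (meson UnCI ends_in_segment subsetD)+
  then have "path_image (linepath (of_real x) (of_real y + \<i> * of_real \<eta>)) \<subseteq> ball (of_real y) r"
    by (simp add: closed_segment_subset)
  then have "homotopic_paths (ball (of_real y) r) (hook x y \<eta>) (linepath (of_real x) (of_real y + \<i> * of_real \<eta>))"
    using path_image_hook_subset_ball[OF assms(1,2)]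
    by (intro homotopic_paths_in_simply_connected convex_imp_simply_connected) auto
  then show ?thesis using assms(3) by (rule homotopic_paths_subset)
qed

lemma contour_integrable_hook:
  fixes N :: nat and f :: "complex \<Rightarrow> complex"
  assumes N: "N > 0" and x: "x = half_lattice N j" "\<bar>x - y\<bar> + \<eta> < r" and \<eta>: "0 < \<eta>"
    and f: "f holomorphic_on ball (of_real y) r"
  shows "(\<lambda>z. f z / (exp (- 2 * of_real pi * \<i> * of_nat N * z) - 1)) contour_integrable_on hook x y \<eta>"
proof (rule contour_integrable_holomorphic_simple)
  show "open (ball (of_real y) r - lattice N)"
    using closed_subset_lattice[OF N] by (intro open_Diff) auto
  show "(\<lambda>z. f z / (exp (- 2 * of_real pi * \<i> * of_nat N * z) - 1)) holomorphic_on ball (of_real y) r - lattice N"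
    by (rule holomorphic_on_upper_kernel_quotient[OF N f])
  have "of_real x \<notin> lattice N"
    using half_lattice_notin_lattice[OF N] x(1) by simp
  then show "path_image (hook x y \<eta>) \<subseteq> ball (of_real y) r - lattice N"
    using path_image_hook_subset_ball[OF x(2) less_imp_le[OF \<eta>]] path_image_hook_upper[OF \<eta>, of x y] Im_lattice
    by fastforce
qed simp

lemma norm_contour_integral_hook_le:
  fixes N :: nat and \<psi>N :: "complex \<Rightarrow> complex"
  defines "G \<equiv> \<lambda>z. exp (of_nat N * \<psi>N z) / (exp (- 2 * of_real pi * \<i> * of_nat N * z) - 1)"
  assumes N: "N > 0" and \<eta>: "0 < \<eta>" "2 \<le> exp (2 * pi * real N * \<eta>)"
    and x: "x = half_lattice N j" "\<bar>x - y\<bar> \<le> 1" "\<bar>x - y\<bar> + \<eta> < r"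
    and hol: "\<psi>N holomorphic_on ball (of_real y) r"
    and margin: "\<And>z. z \<in> ball (of_real y) r \<Longrightarrow> Re (\<psi>N z) \<le> 2 * pi * Im z - c"
  shows "norm (contour_integral (hook x y \<eta>) G) \<le> (\<eta> + 2) * exp (- c * real N)"
proof -
  define v where "v = complex_of_real x + \<i> * of_real \<eta>"
  have ball: "path_image (hook x y \<eta>) \<subseteq> ball (of_real y) r"
    using x(3) \<eta>(1) by (intro path_image_hook_subset_ball) auto
  have "G contour_integrable_on hook x y \<eta>"
    unfolding G_def using hol by (intro contour_integrable_hook[OF N x(1,3) \<eta>(1)] holomorphic_intros)
  then have int: "G contour_integrable_on linepath (of_real x) v"
    "G contour_integrable_on linepath v (of_real y + \<i> * of_real \<eta>)"
    by (simp_all add: hook_def v_def)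
  have "norm (contour_integral (linepath (of_real x) v) G) \<le> exp (- c * real N) * norm (v - of_real x)"
  proof (rule contour_integral_bound_linepath[OF int(1)])
    fix z assume z: "z \<in> closed_segment (of_real x) v"
    then have "z = of_real (half_lattice N j) + \<i> * of_real (Im z)" "z \<in> ball (of_real y) r"
      using ball x(1) by (auto simp: v_def closed_segment_same_Re complex_eq_iff path_image_hook)
    then show "norm (G z) \<le> exp (- c * real N)"
      using norm_upper_kernel_quotient_half_lattice_le[OF N margin, of z j] unfolding G_def by metis
  qed simp
  moreover have "norm (contour_integral (linepath v (of_real y + \<i> * of_real \<eta>)) G)
                   \<le> 2 * exp (- c * real N) * norm (of_real y + \<i> * of_real \<eta> - v)"
  proof (rule contour_integral_bound_linepath[OF int(2)])
    fix z assume z: "z \<in> closed_segment v (of_real y + \<i> * of_real \<eta>)"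
    then have "Im z = \<eta>" "z \<in> ball (of_real y) r"
      using ball by (auto simp: v_def closed_segment_same_Im path_image_hook)
    then show "norm (G z) \<le> 2 * exp (- c * real N)"
      unfolding G_def using \<eta>(2) margin by (intro norm_upper_kernel_quotient_le) auto
  qed simp
  moreover have "norm (v - of_real x) = \<eta>" "norm (of_real y + \<i> * of_real \<eta> - v) \<le> 1"
    using \<eta>(1) x(2) by (auto simp: v_def norm_mult abs_minus_commute simp flip: of_real_diff)
  ultimately have "norm (contour_integral (linepath (of_real x) v) G) \<le> \<eta> * exp (- c * real N)"
    "norm (contour_integral (linepath v (of_real y + \<i> * of_real \<eta>)) G) \<le> 2 * exp (- c * real N)"
    by (auto simp: mult.commute intro: order_trans mult_left_mono)
  moreover have "contour_integral (hook x y \<eta>) G = contour_integral (linepath (of_real x) v) G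
      + contour_integral (linepath v (of_real y + \<i> * of_real \<eta>)) G"
    using int by (simp add: hook_def v_def)
  ultimately show ?thesis
    using norm_triangle_ineq[of "contour_integral (linepath (of_real x) v) G"
                                "contour_integral (linepath v (of_real y + \<i> * of_real \<eta>)) G"]
    by (simp add: algebra_simps)
qed

lemma homotopic_paths_join3_convex:
  assumes h: "homotopic_paths D g1 (linepath p u)" "homotopic_paths D g2 (linepath u v)"
      "homotopic_paths D g3 (linepath v q)"
    and K: "convex K" "K \<subseteq> D" "p \<in> K" "u \<in> K" "v \<in> K" "q \<in> K"
  shows "homotopic_paths D (g1 +++ (g2 +++ g3)) (linepath p q)"
proof -
  have "homotopic_paths D (g1 +++ (g2 +++ g3)) (linepath p u +++ (linepath u v +++ linepath v q))"
    using h homotopic_paths_imp_pathstart homotopic_paths_imp_pathfinish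
    by (intro homotopic_paths_join) fastforce+
  moreover have "homotopic_paths K (linepath p u +++ (linepath u v +++ linepath v q)) (linepath p q)"
    using K closed_segment_subset[OF _ _ K(1)]
    by (intro homotopic_paths_in_simply_connected convex_imp_simply_connected) (auto simp: path_image_join)
  ultimately show ?thesis
    using K(2) homotopic_paths_subset homotopic_paths_trans by blast
qed

lemma hook_detour:
  assumes \<eta>: "0 < \<eta>" and ends: "\<bar>p - A\<bar> + \<eta> < r" "\<bar>q - B\<bar> + \<eta> < r"
    and balls: "ball (of_real A) r \<subseteq> D" "ball (of_real B) r \<subseteq> D"
    and K: "convex K" "K \<subseteq> D" "of_real p \<in> K" "of_real A + \<i> * of_real \<eta> \<in> K"
      "of_real B + \<i> * of_real \<eta> \<in> K" "of_real q \<in> K"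
    and M: "valid_path M" "pathstart M = of_real A + \<i> * of_real \<eta>" "pathfinish M = of_real B + \<i> * of_real \<eta>"
      "path_image M \<subseteq> {z. 0 < Im z}"
      "homotopic_paths D M (linepath (of_real A + \<i> * of_real \<eta>) (of_real B + \<i> * of_real \<eta>))"
  shows "detour D {z. 0 < Im z} (of_real p) (of_real q) (hook p A \<eta> +++ (M +++ reversepath (hook q B \<eta>)))"
proof -
  have "homotopic_paths D (hook p A \<eta>) (linepath (of_real p) (of_real A + \<i> * of_real \<eta>))"
    using ends \<eta> balls by (intro hook_homotopic_linepath) auto
  moreover have "homotopic_paths D (hook q B \<eta>) (linepath (of_real q) (of_real B + \<i> * of_real \<eta>))"
    using ends \<eta> balls by (intro hook_homotopic_linepath) auto
  then have "homotopic_paths D (reversepath (hook q B \<eta>)) (linepath (of_real B + \<i> * of_real \<eta>) (of_real q))"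
    using homotopic_paths_reversepath_D reversepath_linepath by metis
  ultimately have "homotopic_paths D (hook p A \<eta> +++ (M +++ reversepath (hook q B \<eta>))) (linepath (of_real p) (of_real q))"
    using M(5) K by (intro homotopic_paths_join3_convex)
  moreover have "path_image (hook p A \<eta> +++ (M +++ reversepath (hook q B \<eta>)))
      = path_image (hook p A \<eta>) \<union> path_image M \<union> path_image (hook q B \<eta>)"
    using M(2,3) by (simp add: path_image_join path_image_reversepath Un_assoc)
  then have "path_image (hook p A \<eta> +++ (M +++ reversepath (hook q B \<eta>))) - {of_real p, of_real q} \<subseteq> {z. 0 < Im z}"
    using path_image_hook_upper[OF \<eta>, of p A] path_image_hook_upper[OF \<eta>, of q B] M(4) by blast
  ultimately show ?thesis
    using M by (simp add: detour_def)
qed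

lemma norm_contour_integral_join_reversepath_le:
  assumes int: "f contour_integrable_on g1" "f contour_integrable_on g2" "f contour_integrable_on g3"
    and valid: "valid_path g1" "valid_path g2" "valid_path g3" and ends: "pathfinish g2 = pathfinish g3"
  shows "norm (contour_integral (g1 +++ (g2 +++ reversepath g3)) f)
           \<le> norm (contour_integral g1 f) + norm (contour_integral g2 f) + norm (contour_integral g3 f)"
proof -
  have rev: "f contour_integrable_on reversepath g3" "valid_path (reversepath g3)"
    using int(3) valid(3) by (simp_all add: contour_integrable_reversepath)
  moreover have "valid_path (g2 +++ reversepath g3)"
    using valid(2) rev(2) ends by (intro valid_path_join) auto
  ultimately have "contour_integral (g1 +++ (g2 +++ reversepath g3)) f
      = contour_integral g1 f + (contour_integral g2 f + contour_integral (reversepath g3) f)"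
    using int valid contour_integrable_joinI[OF int(2) rev(1) valid(2) rev(2)]
    by (simp add: contour_integral_join)
  then show ?thesis
    using norm_triangle_ineq[of "contour_integral g1 f" "contour_integral g2 f - contour_integral g3 f"]
      norm_triangle_ineq4[of "contour_integral g2 f" "contour_integral g3 f"] valid(3)
    by (simp add: contour_integral_reversepath)
qed

lemma norm_contour_integral_hook_detour_le:
  fixes N :: nat and \<psi>N :: "complex \<Rightarrow> complex" and A B \<eta> r c L :: real and U :: "complex set"
  defines "G \<equiv> \<lambda>z. exp (of_nat N * \<psi>N z) / (exp (- 2 * of_real pi * \<i> * of_nat N * z) - 1)"
    and "V \<equiv> ball (of_real A) r \<union> ball (of_real B) r \<union> U"
  assumes N: "N > 0" and \<eta>: "0 < \<eta>" "2 \<le> exp (pi * real N * \<eta>)"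
    and cuts: "p = half_lattice N j" "q = half_lattice N k"
      "\<bar>p - A\<bar> \<le> 1" "\<bar>p - A\<bar> + \<eta> < r" "\<bar>q - B\<bar> \<le> 1" "\<bar>q - B\<bar> + \<eta> < r"
    and hol: "\<psi>N holomorphic_on V"
    and margin: "\<And>z. z \<in> V \<Longrightarrow> Re (\<psi>N z) \<le> 2 * pi * Im z - c"
    and M: "valid_path M" "pathfinish M = of_real B + \<i> * of_real \<eta>" "path_image M \<subseteq> U"
    and U: "open U" "U \<subseteq> {z. \<eta> / 2 < Im z}"
    and L: "\<And>g Bd. g holomorphic_on U \<Longrightarrow> (\<And>z. z \<in> U \<Longrightarrow> norm (g z) \<le> Bd) \<Longrightarrow> norm (contour_integral M g) \<le> L * Bd"
  shows "norm (contour_integral (hook p A \<eta> +++ (M +++ reversepath (hook q B \<eta>))) G)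
           \<le> (2 * \<eta> + 4 + 2 * L) * exp (- c * real N)"
proof -
  have exp_ge_2: "2 \<le> exp (2 * pi * real N * Im z)" if "\<eta> / 2 \<le> Im z" for z
  proof -
    have "pi * real N * \<eta> \<le> 2 * pi * real N * Im z"
      using mult_left_mono[OF that, of "2 * pi * real N"] by simp
    then show ?thesis using \<eta>(2) by (meson exp_le_cancel_iff order_trans)
  qed
  have hol_balls: "\<psi>N holomorphic_on ball (of_real A) r" "\<psi>N holomorphic_on ball (of_real B) r"
    using hol by (auto simp: V_def intro: holomorphic_on_subset)
  have "2 \<le> exp (2 * pi * real N * \<eta>)"
    using exp_ge_2[of "\<i> * of_real \<eta>"] \<eta>(1) by simp
  moreover have "\<And>z. z \<in> ball (of_real A) r \<Longrightarrow> Re (\<psi>N z) \<le> 2 * pi * Im z - c"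
    "\<And>z. z \<in> ball (of_real B) r \<Longrightarrow> Re (\<psi>N z) \<le> 2 * pi * Im z - c"
    using margin by (auto simp: V_def)
  ultimately have hooks: "norm (contour_integral (hook p A \<eta>) G) \<le> (\<eta> + 2) * exp (- c * real N)"
    "norm (contour_integral (hook q B \<eta>) G) \<le> (\<eta> + 2) * exp (- c * real N)"
    unfolding G_def using norm_contour_integral_hook_le[OF N \<eta>(1)] cuts hol_balls by blast+
  have "G contour_integrable_on hook p A \<eta>" "G contour_integrable_on hook q B \<eta>"
    unfolding G_def using hol_balls
    by (intro contour_integrable_hook[OF N cuts(1,4) \<eta>(1)] contour_integrable_hook[OF N cuts(2,6) \<eta>(1)]
        holomorphic_intros; simp)+
  moreover have "z \<notin> lattice N" if "z \<in> U" for z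
    using U that Im_lattice[of z N] \<eta>(1) by force
  then have GU: "G holomorphic_on U"
    using holomorphic_on_upper_kernel_quotient[OF N, of "\<lambda>z. exp (of_nat N * \<psi>N z)" U]
      holomorphic_on_subset[OF hol, of U]
    by (auto simp: G_def V_def Diff_triv holomorphic_intros)
  moreover have "norm (G z) \<le> 2 * exp (- c * real N)" if "z \<in> U" for z
    unfolding G_def using margin that U(2) exp_ge_2[of z]
    by (intro norm_upper_kernel_quotient_le) (auto simp: V_def)
  then have "norm (contour_integral M G) \<le> L * (2 * exp (- c * real N))"
    using L[OF GU] by blast
  ultimately show ?thesis
    using norm_contour_integral_join_reversepath_le[of G "hook p A \<eta>" M "hook q B \<eta>"] hooks
      contour_integrable_holomorphic_simple[OF GU U(1) M(1,3)] M(1,2)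
    by (simp add: algebra_simps)
qed

lemma eventually_hook_detour:
  fixes A B \<eta> r m L \<delta> :: real and K U :: "complex set" and M :: "real \<Rightarrow> complex"
  defines "V \<equiv> ball (of_real A) r \<union> ball (of_real B) r \<union> U"
  assumes AB: "A < B" and hol: "\<forall>\<^sub>F N in sequentially. \<psi>s N holomorphic_on D"
    and unif: "uniform_limit D \<psi>s \<psi> sequentially"
    and margin: "0 < m" "V \<subseteq> D" "\<forall>z\<in>V. Re (\<psi> z) < 2 * pi * Im z - m"
    and \<eta>: "0 < \<eta>" "\<eta> < r" "\<eta> < \<delta>"
    and K: "convex K" "K \<subseteq> D"
      "\<And>x y. A - \<delta> < x \<Longrightarrow> x < B + \<delta> \<Longrightarrow> \<bar>y\<bar> < \<delta> \<Longrightarrow> complex_of_real x + \<i> * of_real y \<in> K"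
    and M: "valid_path M" "pathstart M = of_real A + \<i> * of_real \<eta>" "pathfinish M = of_real B + \<i> * of_real \<eta>"
      "path_image M \<subseteq> U" "homotopic_paths D M (linepath (of_real A + \<i> * of_real \<eta>) (of_real B + \<i> * of_real \<eta>))"
    and U: "open U" "U \<subseteq> {z. \<eta> / 2 < Im z}"
    and L: "\<And>g Bd. g holomorphic_on U \<Longrightarrow> (\<And>z. z \<in> U \<Longrightarrow> norm (g z) \<le> Bd) \<Longrightarrow> norm (contour_integral M g) \<le> L * Bd"
  shows "\<forall>\<^sub>F N in sequentially. \<exists>\<gamma>.
      detour D {z. 0 < Im z} (of_real (lower_cut A N)) (of_real (upper_cut B N)) \<gamma> \<and>
      norm (contour_integral \<gamma> (\<lambda>z. exp (of_nat N * \<psi>s N z) / (exp (- 2 * of_real pi * \<i> * of_nat N * z) - 1)))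
        \<le> (2 * \<eta> + 4 + 2 * L) * exp (- (m / 2) * real N)"
proof -
  have balls: "ball (of_real A) r \<subseteq> D" "ball (of_real B) r \<subseteq> D" using margin(2) by (auto simp: V_def)
  have "{z. \<eta> / 2 < Im z} \<subseteq> {z. 0 < Im z}" using \<eta>(1) by auto
  then have M_upper: "path_image M \<subseteq> {z. 0 < Im z}" using M(4) U(2) by blast
  have pos: "0 < min (min (r - \<eta>) \<delta>) 1" "0 < pi * \<eta>" using \<eta> by auto
  show ?thesis
    using hol eventually_Re_le_of_margin[where g="\<lambda>z. 2 * pi * Im z", OF unif margin] eventually_cuts_near[OF pos(1), of A B]
      eventually_exp_ge_2[OF pos(2)]
  proof eventually_elim
    case (elim N)
    define p where "p = lower_cut A N"
    define q where "q = upper_cut B N"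
    define \<gamma> where "\<gamma> = hook p A \<eta> +++ (M +++ reversepath (hook q B \<eta>))"
    have close: "\<bar>p - A\<bar> \<le> 1" "\<bar>p - A\<bar> + \<eta> < r" "\<bar>q - B\<bar> \<le> 1" "\<bar>q - B\<bar> + \<eta> < r"
      "A - \<delta> < p" "p < B + \<delta>" "A - \<delta> < q" "q < B + \<delta>"
      using elim AB unfolding p_def q_def abs_less_iff by auto
    have "of_real p \<in> K" "of_real A + \<i> * of_real \<eta> \<in> K" "of_real B + \<i> * of_real \<eta> \<in> K" "of_real q \<in> K"
      using K(3)[of p 0] K(3)[of A \<eta>] K(3)[of B \<eta>] K(3)[of q 0] close AB \<eta> by auto
    then have detour: "detour D {z. 0 < Im z} (of_real p) (of_real q) \<gamma>"
      unfolding \<gamma>_def using hook_detour[OF \<eta>(1) close(2,4) balls K(1,2)] M M_upper by blast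
    have "p = half_lattice N (\<lceil>A * real N\<rceil> - 1)" "q = half_lattice N \<lfloor>B * real N\<rfloor>"
      by (simp_all add: p_def q_def lower_cut_def upper_cut_def)
    moreover have "pi * real N * \<eta> = pi * \<eta> * real N" by simp
    then have "2 \<le> exp (pi * real N * \<eta>)" using elim(4) by (simp only:)
    moreover have "0 < N" using elim(3) by simp
    moreover have "\<And>z. z \<in> V \<Longrightarrow> Re (\<psi>s N z) \<le> 2 * pi * Im z - m / 2" using elim(2) by blast
    moreover have "\<psi>s N holomorphic_on ball (of_real A) r \<union> ball (of_real B) r \<union> U"
      using holomorphic_on_subset[OF elim(1) margin(2)] by (simp add: V_def)
    ultimately have "norm (contour_integral \<gamma>
        (\<lambda>z. exp (of_nat N * \<psi>s N z) / (exp (- 2 * of_real pi * \<i> * of_nat N * z) - 1)))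
        \<le> (2 * \<eta> + 4 + 2 * L) * exp (- (m / 2) * real N)"
      unfolding \<gamma>_def using close M(1,3,4) U L
      by (intro norm_contour_integral_hook_detour_le[where U=U, OF _ \<eta>(1)]) (simp_all add: V_def)
    with detour show ?case unfolding p_def q_def by blast
  qed
qed

lemma eventually_upper_detour:
  fixes A B :: real and \<psi>s :: "nat \<Rightarrow> complex \<Rightarrow> complex" and \<psi> :: "complex \<Rightarrow> complex"
  assumes AB: "A < B" and D: "open D" and seg: "complex_of_real ` {A..B} \<subseteq> D"
    and hol: "\<forall>\<^sub>F N in sequentially. \<psi>s N holomorphic_on D"
    and unif: "uniform_limit D \<psi>s \<psi> sequentially" and cont: "continuous_on D \<psi>"
    and C: "path C" "pathstart C = of_real A" "pathfinish C = of_real B"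
      "path_image C \<subseteq> region_plus D \<psi>" "homotopic_paths D C (linepath (of_real A) (of_real B))"
  obtains \<gamma> where
    "\<forall>\<^sub>F N in sequentially. detour D {z. 0 < Im z} (of_real (lower_cut A N)) (of_real (upper_cut B N)) (\<gamma> N)"
    "exponentially_small (\<lambda>N. contour_integral (\<gamma> N)
       (\<lambda>z. exp (of_nat N * \<psi>s N z) / (exp (- 2 * of_real pi * \<i> * of_nat N * z) - 1)))"
proof -
  define P where "P = path_image C"
  have P: "compact P" "P \<subseteq> D" "P \<subseteq> {z. 0 \<le> Im z}" "of_real A \<in> P" "of_real B \<in> P"
    using C pathstart_in_path_image[of C] pathfinish_in_path_image[of C]
    by (auto simp: P_def region_plus_def intro: compact_path_image)
  obtain m r where m: "m > 0" "r > 0"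
    and margin: "\<And>x z. x \<in> P \<Longrightarrow> z \<in> ball x r \<Longrightarrow> z \<in> D \<and> Re (\<psi> z) - 2 * pi * Im z < - m"
  proof (rule compact_uniform_margin[OF P(1,2) D])
    show "continuous_on D (\<lambda>z. Re (\<psi> z) - 2 * pi * Im z)"
      using cont by (intro continuous_intros)
    show "Re (\<psi> z) - 2 * pi * Im z < 0" if "z \<in> P" for z
      using that C(4) by (auto simp: P_def region_plus_def)
  qed blast
  obtain K \<delta> where K: "convex K" "open K" "K \<subseteq> D" "\<delta> > 0"
    "\<And>x y. A - \<delta> < x \<Longrightarrow> x < B + \<delta> \<Longrightarrow> \<bar>y\<bar> < \<delta> \<Longrightarrow> complex_of_real x + \<i> * of_real y \<in> K"
    using convex_neighbourhood_real_segment[OF D seg less_imp_le[OF AB]] by blast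
  have balls: "(\<Union>x\<in>P. ball x (min r \<delta>)) \<subseteq> D" using margin by force
  have "0 < min r \<delta>" using m(2) K(4) by simp
  obtain \<eta> M where \<eta>: "0 < \<eta>" "2 * \<eta> < min r \<delta>" and M: "valid_path M"
    "pathstart M = of_real A + \<i> * of_real \<eta>" "pathfinish M = of_real B + \<i> * of_real \<eta>"
    "path_image M \<subseteq> (\<Union>x\<in>P. ball x (min r \<delta>)) \<inter> {z. \<eta> / 2 < Im z}"
    "homotopic_paths D M (linepath (of_real A + \<i> * of_real \<eta>) (of_real B + \<i> * of_real \<eta>))"
    unfolding P_def
    by (rule lifted_path_homotopic[OF C(1) P(3)[unfolded P_def] C(5) D \<open>0 < min r \<delta>\<close> balls[unfolded P_def]])
  define U where "U = (\<Union>x\<in>P. ball x r) \<inter> {z. \<eta> / 2 < Im z}"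
  have "open U" unfolding U_def by (intro open_Int open_halfspace_Im_gt) auto
  moreover have "(\<Union>x\<in>P. ball x (min r \<delta>)) \<subseteq> (\<Union>x\<in>P. ball x r)" by auto
  then have "path_image M \<subseteq> U" using M(4) by (auto simp: U_def)
  ultimately have U: "open U" "U \<subseteq> {z. \<eta> / 2 < Im z}" "path_image M \<subseteq> U"
    by (auto simp: U_def)
  obtain L where L: "\<And>g Bd. g holomorphic_on U \<Longrightarrow> (\<And>z. z \<in> U \<Longrightarrow> norm (g z) \<le> Bd) \<Longrightarrow>
      norm (contour_integral M g) \<le> L * Bd"
    using contour_integral_bound_exists[OF U(1) M(1) U(3)] by blast
  have V: "ball (of_real A) r \<union> ball (of_real B) r \<union> U \<subseteq> D"
    "\<forall>z\<in>ball (of_real A) r \<union> ball (of_real B) r \<union> U. Re (\<psi> z) < 2 * pi * Im z - m"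
    using margin P(4,5) by (fastforce simp: U_def)+
  have "\<forall>\<^sub>F N in sequentially. \<exists>\<gamma>.
      detour D {z. 0 < Im z} (of_real (lower_cut A N)) (of_real (upper_cut B N)) \<gamma> \<and>
      norm (contour_integral \<gamma> (\<lambda>z. exp (of_nat N * \<psi>s N z) / (exp (- 2 * of_real pi * \<i> * of_nat N * z) - 1)))
        \<le> (2 * \<eta> + 4 + 2 * L) * exp (- (m / 2) * real N)"
    using \<eta> by (intro eventually_hook_detour[OF AB hol unif m(1) V _ _ _ K(1,3,5) M(1-3) U(3) M(5) U(1,2) L]) auto
  then obtain \<gamma> where "\<forall>\<^sub>F N in sequentially.
      detour D {z. 0 < Im z} (of_real (lower_cut A N)) (of_real (upper_cut B N)) (\<gamma> N) \<and>
      norm (contour_integral (\<gamma> N) (\<lambda>z. exp (of_nat N * \<psi>s N z) / (exp (- 2 * of_real pi * \<i> * of_nat N * z) - 1)))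
        \<le> (2 * \<eta> + 4 + 2 * L) * exp (- (m / 2) * real N)"
    unfolding eventually_ex by blast
  then show ?thesis
    using m(1) by (intro that exponentially_smallI[of "m / 2"]) (auto elim: eventually_mono)
qed

section \<open>Reflection to the lower half-plane\<close>

lemma homotopic_paths_reflect:
  fixes g h :: "real \<Rightarrow> complex"
  assumes "homotopic_paths D g h"
  shows "homotopic_paths (uminus ` D) (uminus \<circ> reversepath g) (uminus \<circ> reversepath h)"
  using homotopic_paths_reversepath_D[OF assms]
  by (rule homotopic_paths_continuous_image) (auto intro!: continuous_intros)

lemma uminus_comp_linepath: "uminus \<circ> linepath p q = linepath (- p) (- q)"
  by (rule ext) (simp add: linepath_def algebra_simps)

lemma path_image_reflect: "path_image (uminus \<circ> reversepath g) = uminus ` path_image g"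
  by (simp add: path_image_compose path_image_reversepath)

lemma contour_integral_reflect:
  assumes "valid_path g"
  shows "contour_integral (uminus \<circ> reversepath g) h = contour_integral g (\<lambda>z. h (- z))"
  using assms by (simp add: contour_integral_negatepath contour_integral_reversepath)

lemma detour_reflect:
  assumes "detour D H p q \<gamma>"
  shows "detour (uminus ` D) (uminus ` H) (- q) (- p) (uminus \<circ> reversepath \<gamma>)"
  using assms homotopic_paths_reflect[of D \<gamma> "linepath p q"]
  by (auto simp: detour_def valid_path_negatepath path_image_reflect uminus_comp_linepath)

lemma holomorphic_on_reflect:
  assumes "f holomorphic_on D"
  shows "(\<lambda>z. f (- z)) holomorphic_on uminus ` D"
proof -
  have "(f \<circ> uminus) holomorphic_on uminus ` D"
    by (rule holomorphic_on_compose) (use assms in \<open>auto simp: image_image intro!: holomorphic_intros\<close>)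
  then show ?thesis by (simp add: o_def)
qed

lemma continuous_on_reflect:
  fixes f :: "complex \<Rightarrow> 'a::topological_space"
  assumes "continuous_on D f"
  shows "continuous_on (uminus ` D) (\<lambda>z. f (- z))"
  by (rule continuous_on_compose2[OF assms]) (auto intro!: continuous_intros)

lemma uniform_limit_reflect:
  fixes fs :: "'i \<Rightarrow> complex \<Rightarrow> 'a::metric_space"
  assumes "uniform_limit D fs f F"
  shows "uniform_limit (uminus ` D) (\<lambda>n z. fs n (- z)) (\<lambda>z. f (- z)) F"
  using assms by (simp add: uniform_limit_iff)

lemma region_minus_reflect: "uminus ` region_minus D \<psi> = region_plus (uminus ` D) (\<lambda>z. \<psi> (- z))"
  by (force simp: region_minus_def region_plus_def image_iff)

lemma real_segment_reflect:
  assumes "complex_of_real ` {A..B} \<subseteq> D"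
  shows "complex_of_real ` {- B..- A} \<subseteq> uminus ` D"
proof
  fix z assume "z \<in> complex_of_real ` {- B..- A}"
  then obtain x where x: "x \<in> {- B..- A}" "z = of_real x" by blast
  then have "of_real (- x) \<in> D" using assms by auto
  then show "z \<in> uminus ` D" using x by (auto intro: image_eqI[of _ _ "of_real (- x)"])
qed

lemma uminus_upper_halfplane: "uminus ` {z. 0 < Im z} = {z. Im z < 0}"
proof
  show "{z. Im z < 0} \<subseteq> uminus ` {z. 0 < Im z}"
  proof
    fix z assume "z \<in> {z. Im z < 0}"
    then show "z \<in> uminus ` {z. 0 < Im z}" by (intro image_eqI[of _ _ "- z"]) auto
  qed
qed auto

lemma eventually_lower_detour:
  fixes A B :: real and \<psi>s :: "nat \<Rightarrow> complex \<Rightarrow> complex" and \<psi> :: "complex \<Rightarrow> complex"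
  assumes AB: "A < B" and D: "open D" and seg: "complex_of_real ` {A..B} \<subseteq> D"
    and hol: "\<forall>\<^sub>F N in sequentially. \<psi>s N holomorphic_on D"
    and unif: "uniform_limit D \<psi>s \<psi> sequentially" and cont: "continuous_on D \<psi>"
    and C: "path C" "pathstart C = of_real A" "pathfinish C = of_real B"
      "path_image C \<subseteq> region_minus D \<psi>" "homotopic_paths D C (linepath (of_real A) (of_real B))"
  obtains \<gamma> where
    "\<forall>\<^sub>F N in sequentially. detour D {z. Im z < 0} (of_real (lower_cut A N)) (of_real (upper_cut B N)) (\<gamma> N)"
    "exponentially_small (\<lambda>N. contour_integral (\<gamma> N)
       (\<lambda>z. exp (of_nat N * \<psi>s N z) / (exp (2 * of_real pi * \<i> * of_nat N * z) - 1)))"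
proof -
  define D' where "D' = uminus ` D"
  have D'D: "uminus ` D' = D" by (simp add: D'_def image_image)
  have D': "open D'" using D by (simp add: D'_def open_negations)
  have seg': "complex_of_real ` {- B..- A} \<subseteq> D'"
    unfolding D'_def by (rule real_segment_reflect[OF seg])
  have hol': "\<forall>\<^sub>F N in sequentially. (\<lambda>z. \<psi>s N (- z)) holomorphic_on D'"
    using hol by eventually_elim (simp add: D'_def holomorphic_on_reflect)
  have C': "path (uminus \<circ> reversepath C)" "pathstart (uminus \<circ> reversepath C) = of_real (- B)"
    "pathfinish (uminus \<circ> reversepath C) = of_real (- A)"
    "path_image (uminus \<circ> reversepath C) \<subseteq> region_plus D' (\<lambda>z. \<psi> (- z))"
    "homotopic_paths D' (uminus \<circ> reversepath C) (linepath (of_real (- B)) (of_real (- A)))"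
    using C homotopic_paths_reflect[OF C(5)] region_minus_reflect[of D \<psi>]
    by (auto simp: D'_def path_image_reflect uminus_comp_linepath pathstart_compose pathfinish_compose
                   intro!: continuous_intros path_continuous_image)
  obtain \<gamma> where
    up: "\<forall>\<^sub>F N in sequentially. detour D' {z. 0 < Im z} (of_real (lower_cut (- B) N)) (of_real (upper_cut (- A) N)) (\<gamma> N)"
    and small: "exponentially_small (\<lambda>N. contour_integral (\<gamma> N)
       (\<lambda>z. exp (of_nat N * \<psi>s N (- z)) / (exp (- 2 * of_real pi * \<i> * of_nat N * z) - 1)))"
    by (rule eventually_upper_detour[OF _ D' seg' hol' uniform_limit_reflect[OF unif, folded D'_def]
        continuous_on_reflect[OF cont, folded D'_def] C']) (use AB in simp)
  have det: "\<forall>\<^sub>F N in sequentially.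
      detour D {z. Im z < 0} (of_real (lower_cut A N)) (of_real (upper_cut B N)) (uminus \<circ> reversepath (\<gamma> N))"
    using up eventually_gt_at_top[of 0]
  proof eventually_elim
    case (elim N)
    then show ?case
      using detour_reflect[OF elim(1)] D'D uminus_upper_halfplane by (simp add: lower_cut_uminus upper_cut_uminus)
  qed
  have "\<forall>\<^sub>F N in sequentially.
      contour_integral (uminus \<circ> reversepath (\<gamma> N))
        (\<lambda>z. exp (of_nat N * \<psi>s N z) / (exp (2 * of_real pi * \<i> * of_nat N * z) - 1))
      = contour_integral (\<gamma> N) (\<lambda>z. exp (of_nat N * \<psi>s N (- z)) / (exp (- 2 * of_real pi * \<i> * of_nat N * z) - 1))"
    using up by eventually_elim (simp add: contour_integral_reflect detourD(1))
  then show ?thesis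
    by (rule that[OF det exponentially_small_eventually_eq[OF small]])
qed

section \<open>The segment between the cut points\<close>

lemma contour_integral_linepath_split_convex:
  assumes f: "f holomorphic_on K" and K: "convex K" "open K" and pts: "p \<in> K" "u \<in> K" "q \<in> K"
  shows "contour_integral (linepath p q) f = contour_integral (linepath p u) f + contour_integral (linepath u q) f"
proof -
  obtain F where F: "\<And>x. x \<in> K \<Longrightarrow> (F has_field_derivative f x) (at x within K)"
    using holomorphic_convex_primitive'[OF K f] by blast
  have "contour_integral (linepath v w) f = F w - F v" if "v \<in> K" "w \<in> K" for v w
    using contour_integral_primitive[OF F valid_path_linepath, of v w] closed_segment_subset[OF that K(1)]
    by (simp add: contour_integral_unique)
  then show ?thesis using pts by simp
qed

lemma contour_integral_real_linepath:
  fixes a b :: real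
  assumes "a < b" "continuous_on (closed_segment (of_real a) (of_real b)) f"
  shows "contour_integral (linepath (of_real a) (of_real b)) f = integral {a..b} (\<lambda>t. f (of_real t))"
proof -
  have "f contour_integrable_on linepath (of_real a) (of_real b)"
    using assms(2) by (rule contour_integrable_continuous_linepath)
  then have "(f has_contour_integral contour_integral (linepath (of_real a) (of_real b)) f) (linepath (of_real a) (of_real b))"
    by (rule has_contour_integral_integral)
  then have "((\<lambda>t. f (of_real t)) has_integral contour_integral (linepath (of_real a) (of_real b)) f) {a..b}"
    using has_contour_integral_linepath_Reals_iff[of "of_real a" "of_real b" f] assms(1) by simp
  then show ?thesis by (simp add: integral_unique)
qed

lemma contour_integral_real_linepath_diff_integral:
  fixes p a b q :: real
  assumes f: "f holomorphic_on K" and K: "convex K" "open K"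
    and pts: "of_real p \<in> K" "of_real a \<in> K" "of_real b \<in> K" "of_real q \<in> K" and ab: "a < b"
  shows "contour_integral (linepath (of_real p) (of_real q)) f - integral {a..b} (\<lambda>t. f (of_real t))
    = contour_integral (linepath (of_real p) (of_real a)) f + contour_integral (linepath (of_real b) (of_real q)) f"
proof -
  have "continuous_on (closed_segment (of_real a) (of_real b)) f"
    using holomorphic_on_imp_continuous_on[OF f] closed_segment_subset[OF pts(2,3) K(1)]
    by (rule continuous_on_subset)
  then have "contour_integral (linepath (of_real a) (of_real b)) f = integral {a..b} (\<lambda>t. f (of_real t))"
    by (rule contour_integral_real_linepath[OF ab])
  moreover have "contour_integral (linepath (of_real p) (of_real q)) f = contour_integral (linepath (of_real p) (of_real a)) f
      + contour_integral (linepath (of_real a) (of_real b)) f + contour_integral (linepath (of_real b) (of_real q)) f"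
    using contour_integral_linepath_split_convex[OF f K] pts by metis
  ultimately show ?thesis by simp
qed

lemma norm_contour_integral_short_linepath_le:
  assumes "\<And>z. z \<in> closed_segment u v \<Longrightarrow> norm (f z) \<le> B" "norm (v - u) \<le> 1" "0 \<le> B"
  shows "norm (contour_integral (linepath u v) f) \<le> B"
proof (cases "f contour_integrable_on linepath u v")
  case True
  then have "norm (contour_integral (linepath u v) f) \<le> B * norm (v - u)"
    using assms by (intro contour_integral_bound_linepath) auto
  also have "\<dots> \<le> B" using assms(2,3) mult_left_le by blast
  finally show ?thesis .
qed (use assms in \<open>simp add: not_integrable_contour_integral\<close>)

lemma norm_real_linepath_diff_integral_le:
  fixes p a b q r e :: real
  assumes f: "f holomorphic_on K" and K: "convex K" "open K"
    and pts: "of_real p \<in> K" "of_real a \<in> K" "of_real b \<in> K" "of_real q \<in> K" and ab: "a < b"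
    and close: "\<bar>p - a\<bar> < r" "\<bar>q - b\<bar> < r" "\<bar>p - a\<bar> \<le> 1" "\<bar>q - b\<bar> \<le> 1"
    and small: "\<And>z. z \<in> ball (of_real a) r \<union> ball (of_real b) r \<Longrightarrow> norm (f z) \<le> e" and e: "0 \<le> e"
  shows "norm (contour_integral (linepath (of_real p) (of_real q)) f - integral {a..b} (\<lambda>t. f (of_real t))) \<le> 2 * e"
proof -
  have "of_real p \<in> ball (complex_of_real a) r" "of_real q \<in> ball (complex_of_real b) r"
    using close by (simp_all add: dist_norm abs_minus_commute flip: of_real_diff)
  moreover have "0 < r" using close(1) by linarith
  ultimately have "closed_segment (of_real p) (of_real a) \<subseteq> ball (complex_of_real a) r"
    "closed_segment (of_real b) (of_real q) \<subseteq> ball (complex_of_real b) r"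
    by (intro closed_segment_subset convex_ball; simp)+
  then have "norm (contour_integral (linepath (of_real p) (of_real a)) f) \<le> e"
    "norm (contour_integral (linepath (of_real b) (of_real q)) f) \<le> e"
    using small close(3,4) e
    by (auto intro!: norm_contour_integral_short_linepath_le simp: abs_minus_commute simp flip: of_real_diff)
  then show ?thesis
    using contour_integral_real_linepath_diff_integral[OF f K pts ab]
      norm_triangle_ineq[of "contour_integral (linepath (of_real p) (of_real a)) f"
                            "contour_integral (linepath (of_real b) (of_real q)) f"]
    by simp
qed

lemma exponentially_small_cut_segment_integral_diff:
  fixes a b :: real and \<psi>s :: "nat \<Rightarrow> complex \<Rightarrow> complex" and \<psi> :: "complex \<Rightarrow> complex"
  assumes ab: "a < b" and D: "open D" and seg: "complex_of_real ` {a..b} \<subseteq> D"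
    and hol: "\<forall>\<^sub>F N in sequentially. \<psi>s N holomorphic_on D"
    and unif: "uniform_limit D \<psi>s \<psi> sequentially" and cont: "continuous_on D \<psi>"
    and neg: "Re (\<psi> (of_real a)) < 0" "Re (\<psi> (of_real b)) < 0"
  shows "exponentially_small (\<lambda>N.
    contour_integral (linepath (of_real (lower_cut a N)) (of_real (upper_cut b N))) (\<lambda>z. exp (of_nat N * \<psi>s N z))
      - integral {a..b} (\<lambda>t. exp (of_nat N * \<psi>s N (of_real t))))"
proof -
  have ends_D: "{of_real a, of_real b} \<subseteq> D" using seg ab by auto
  obtain m r where m: "m > 0" "r > 0"
    and margin: "\<And>x z. x \<in> {of_real a, of_real b} \<Longrightarrow> z \<in> ball x r \<Longrightarrow> z \<in> D \<and> Re (\<psi> z) < - m"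
    using compact_uniform_margin[OF _ ends_D D, of "\<lambda>z. Re (\<psi> z)"] cont neg
    by (auto intro!: continuous_intros)
  obtain K \<delta> where K: "convex K" "open K" "K \<subseteq> D" "\<delta> > 0"
    "\<And>x y. a - \<delta> < x \<Longrightarrow> x < b + \<delta> \<Longrightarrow> \<bar>y\<bar> < \<delta> \<Longrightarrow> complex_of_real x + \<i> * of_real y \<in> K"
    using convex_neighbourhood_real_segment[OF D seg less_imp_le[OF ab]] by blast
  have pos: "0 < min (min r \<delta>) 1" using m K(4) by simp
  have V: "ball (of_real a) r \<union> ball (of_real b) r \<subseteq> D"
    "\<forall>z\<in>ball (of_real a) r \<union> ball (of_real b) r. Re (\<psi> z) < 0 - m"
    using margin[of "of_real a"] margin[of "of_real b"] by auto
  have "\<forall>\<^sub>F N in sequentially.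
      norm (contour_integral (linepath (of_real (lower_cut a N)) (of_real (upper_cut b N))) (\<lambda>z. exp (of_nat N * \<psi>s N z))
        - integral {a..b} (\<lambda>t. exp (of_nat N * \<psi>s N (of_real t))))
      \<le> 2 * exp (- (m / 2) * real N)"
    using hol eventually_Re_le_of_margin[where g="\<lambda>z. 0", OF unif m(1) V] eventually_cuts_near[OF pos, of a b]
  proof eventually_elim
    case (elim N)
    define f where "f = (\<lambda>z. exp (of_nat N * \<psi>s N z))"
    define p where "p = lower_cut a N"
    define q where "q = upper_cut b N"
    have close: "\<bar>p - a\<bar> < r" "\<bar>q - b\<bar> < r" "\<bar>p - a\<bar> \<le> 1" "\<bar>q - b\<bar> \<le> 1"
      "a - \<delta> < p" "p < b + \<delta>" "a - \<delta> < q" "q < b + \<delta>"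
      using elim ab unfolding p_def q_def abs_less_iff by auto
    then have in_K: "of_real p \<in> K" "of_real a \<in> K" "of_real b \<in> K" "of_real q \<in> K"
      using K(5)[of _ 0] K(4) ab by auto
    have "norm (f z) \<le> exp (- (m / 2) * real N)" if "z \<in> ball (of_real a) r \<union> ball (of_real b) r" for z
      using elim(2) that unfolding f_def by (intro norm_exp_of_nat_mult_le) simp
    moreover have "f holomorphic_on K"
      unfolding f_def using elim(1) K(3) by (auto intro!: holomorphic_intros intro: holomorphic_on_subset)
    ultimately have "norm (contour_integral (linepath (of_real p) (of_real q)) f - integral {a..b} (\<lambda>t. f (of_real t)))
        \<le> 2 * exp (- (m / 2) * real N)"
      by (intro norm_real_linepath_diff_integral_le[OF _ K(1,2) in_K ab close(1-4)]) auto
    then show ?case by (simp add: f_def p_def q_def)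
  qed
  then show ?thesis
    using m(1) by (intro exponentially_smallI[of "m / 2"]) auto
qed

theorem proposition4p1:
  fixes a b :: real and D :: "complex set"
    and \<psi>s :: "nat \<Rightarrow> complex \<Rightarrow> complex" and \<psi> :: "complex \<Rightarrow> complex"
    and Cp Cm :: "real \<Rightarrow> complex"
  assumes "a < b"
    and "open D" and "connected D"
    and "complex_of_real ` {a..b} \<subseteq> D"
    and "\<And>N. N \<ge> 1 \<Longrightarrow> \<psi>s N holomorphic_on D"
    and "uniform_limit D \<psi>s \<psi> sequentially"
    and "\<psi> holomorphic_on D"
    and "Re (\<psi> (complex_of_real a)) < 0" and "Re (\<psi> (complex_of_real b)) < 0"
    and "path Cp" and "pathstart Cp = complex_of_real a" and "pathfinish Cp = complex_of_real b"
    and "path_image Cp \<subseteq> region_plus D \<psi>"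
    and "homotopic_paths D Cp (linepath (complex_of_real a) (complex_of_real b))"
    and "path Cm" and "pathstart Cm = complex_of_real a" and "pathfinish Cm = complex_of_real b"
    and "path_image Cm \<subseteq> region_minus D \<psi>"
    and "homotopic_paths D Cm (linepath (complex_of_real a) (complex_of_real b))"
  shows "\<exists>\<epsilon>>0. \<exists>C. \<forall>\<^sub>F N in sequentially.
           norm (lattice_sum a b N (\<psi>s N)
                 - integral {a..b} (\<lambda>t. exp (of_nat N * \<psi>s N (complex_of_real t))))
             \<le> C * exp (- \<epsilon> * real N)"
proof -
  have hol: "\<forall>\<^sub>F N in sequentially. \<psi>s N holomorphic_on D"
    using eventually_ge_at_top[of 1] by eventually_elim (rule assms(5))
  have cont: "continuous_on D \<psi>"
    using assms(7) by (rule holomorphic_on_imp_continuous_on)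
  obtain \<gamma>u where up: "\<forall>\<^sub>F N in sequentially.
      detour D {z. 0 < Im z} (of_real (lower_cut a N)) (of_real (upper_cut b N)) (\<gamma>u N)"
    and small_up: "exponentially_small (\<lambda>N. contour_integral (\<gamma>u N)
      (\<lambda>z. exp (of_nat N * \<psi>s N z) / (exp (- 2 * of_real pi * \<i> * of_nat N * z) - 1)))"
    by (rule eventually_upper_detour[OF assms(1,2,4) hol assms(6) cont assms(10-14)])
  obtain \<gamma>l where low: "\<forall>\<^sub>F N in sequentially.
      detour D {z. Im z < 0} (of_real (lower_cut a N)) (of_real (upper_cut b N)) (\<gamma>l N)"
    and small_low: "exponentially_small (\<lambda>N. contour_integral (\<gamma>l N)
      (\<lambda>z. exp (of_nat N * \<psi>s N z) / (exp (2 * of_real pi * \<i> * of_nat N * z) - 1)))"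
    by (rule eventually_lower_detour[OF assms(1,2,4) hol assms(6) cont assms(15-19)])
  note small = exponentially_small_add[OF exponentially_small_add[OF
      exponentially_small_cut_segment_integral_diff[OF assms(1,2,4) hol assms(6) cont assms(8,9)] small_low] small_up]
  have "\<forall>\<^sub>F N in sequentially.
      lattice_sum a b N (\<psi>s N) - integral {a..b} (\<lambda>t. exp (of_nat N * \<psi>s N (complex_of_real t)))
      = (contour_integral (linepath (of_real (lower_cut a N)) (of_real (upper_cut b N))) (\<lambda>z. exp (of_nat N * \<psi>s N z))
          - integral {a..b} (\<lambda>t. exp (of_nat N * \<psi>s N (complex_of_real t))))
        + contour_integral (\<gamma>l N) (\<lambda>z. exp (of_nat N * \<psi>s N z) / (exp (2 * of_real pi * \<i> * of_nat N * z) - 1))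
        + contour_integral (\<gamma>u N) (\<lambda>z. exp (of_nat N * \<psi>s N z) / (exp (- 2 * of_real pi * \<i> * of_nat N * z) - 1))"
    using up low hol eventually_gt_at_top[of 0]
  proof eventually_elim
    case (elim N)
    then show ?case
      unfolding lattice_sum_def using assms(1-4)
      by (subst lattice_sum_contour_formula[OF _ _ _ _ _ _ elim(1,2)]) (auto intro!: holomorphic_intros)
  qed
  with small show ?thesis
    unfolding exponentially_small_def[symmetric] by (rule exponentially_small_eventually_eq)
qed

end
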